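(* Let $G$ be a directed graph on vertex set $[n]$ and write $$\omega B_G(\mathbf x;y+1,z+1)=\sum_{\alpha\vDash n}c^G_\alpha(y,z)\frac{\Psi_\alpha(\mathbf x)}{z_\alpha}.$$ Then $c^G_\alpha(y,z)\in\mathbb N[y,z]$ for all compositions $\alpha$.
   Context: For a coloring $\kappa:[n]\to\mathbb Z_{>0}$, $\mathrm{asc}(\kappa)$ is the number of directed edges $(i,j)$ of $G$ with $\kappa(i)<\kappa(j)$ and $\mathrm{inv}(\kappa)$ is the number of directed edges $(i,j)$ with $\kappa(i)>\kappa(j)$ (edges counted with multiplicity). The $B$-polynomial is $B_G(\mathbf x;y,z)=\sum_{\kappa:[n]\to\mathbb Z_{>0}}x_{\kappa(1)}\cdots x_{\kappa(n)}y^{\mathrm{asc}(\kappa)}z^{\mathrm{inv}(\kappa)}$. $\omega$ is the linear automorphism of quasisymmetric functions with $\omega(F_{n,S})=F_{n,[n-1]\setminus(n-S)}$, where $F_{n,S}=\sum_{j_1\le\dots\le j_n,\ j_i<j_{i+1}\ (i\in S)}x_{j_1}\cdots x_{j_n}$ and $n-S=\{n-s:s\in S\}$, extended coefficientwise in $y,z$. Here $z_\alpha=\prod_i i^{m_i}m_i!$ ($m_i$ the number of parts of $\alpha$ equal to $i$) is a constant, not the variable $z$. For compositions: $S_\alpha=\{\alpha_1,\dots,\alpha_1+\dots+\alpha_{\ell-1}\}$, blocks $B_i(\alpha)$ consecutive intervals of sizes $\alpha_i$, $\alpha\le\beta$ iff $S_\beta\subseteq S_\alpha$; $M_\alpha=\sum_{i_1<\dots<i_\ell}x_{i_1}^{\alpha_1}\cdots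 x_{i_\ell}^{\alpha_\ell}$; $\pi(\gamma)=\prod_i(\gamma_1+\dots+\gamma_i)$; $\pi(\alpha,\beta)=\prod_i\pi(\alpha^{(i)})$ with $\alpha^{(i)}$ the parts of $\alpha$ whose blocks lie in $B_i(\beta)$; $\Psi_\alpha=z_\alpha\sum_{\beta\ge\alpha}\pi(\alpha,\beta)^{-1}M_\beta$. *)

theory Defs
  imports "HOL-Computational_Algebra.Polynomial" "HOL-Library.Multiset" "HOL-Library.FuncSet"
begin

text \<open>Coefficient ring: bivariate rational polynomials in y (outer) and z (inner).\<close>
type_synonym rpoly2 = "rat poly poly"

definition yvar :: rpoly2 where "yvar = monom 1 1"
definition zvar :: rpoly2 where "zvar = [:monom 1 1:]"
definition const2 :: "rat \<Rightarrow> rpoly2" where "const2 r = [:[:r:]:]"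

definition in_Nyz :: "rpoly2 \<Rightarrow> bool" where
  "in_Nyz p \<longleftrightarrow> (\<forall>i j. coeff (coeff p i) j \<in> \<nat>)"

text \<open>A homogeneous formal power series in x_1, x_2, ... is represented by its
  coefficient function on exponent vectors e (e j = exponent of x_j, j >= 1).\<close>

definition asc :: "(nat \<times> nat) multiset \<Rightarrow> (nat \<Rightarrow> nat) \<Rightarrow> nat" where
  "asc E \<kappa> = size (filter_mset (\<lambda>(i,j). \<kappa> i < \<kappa> j) E)"
definition inv :: "(nat \<times> nat) multiset \<Rightarrow> (nat \<Rightarrow> nat) \<Rightarrow> nat" where
  "inv E \<kappa> = size (filter_mset (\<lambda>(i,j). \<kappa> i > \<kappa> j) E)"

definition Bcoef :: "nat \<Rightarrow> (nat \<times> nat) multiset \<Rightarrow> rpoly2 \<Rightarrow> rpoly2 \<Rightarrow> (nat \<Rightarrow> nat) \<Rightarrow> rpoly2" where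
  "Bcoef n E Y Z e = (\<Sum>\<kappa>\<in>{\<kappa>\<in>{1..n} \<rightarrow>\<^sub>E {1..}. \<forall>j. card {i\<in>{1..n}. \<kappa> i = j} = e j}.
      Y ^ asc E \<kappa> * Z ^ inv E \<kappa>)"

definition Fcoef :: "nat \<Rightarrow> nat set \<Rightarrow> (nat \<Rightarrow> nat) \<Rightarrow> nat" where
  "Fcoef n S e = card {js. length js = n \<and> sorted js \<and> (\<forall>j\<in>set js. 1 \<le> j)
      \<and> (\<forall>i\<in>S. js ! (i - 1) < js ! i) \<and> (\<forall>j. count_list js j = e j)}"

definition comps :: "nat \<Rightarrow> nat list set" where
  "comps n = {\<alpha>. (\<forall>a\<in>set \<alpha>. 0 < a) \<and> sum_list \<alpha> = n}"

definition psum :: "nat list \<Rightarrow> nat \<Rightarrow> nat" where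
  "psum \<alpha> k = sum_list (take k \<alpha>)"

definition Sset :: "nat list \<Rightarrow> nat set" where
  "Sset \<alpha> = psum \<alpha> ` {1..<length \<alpha>}"

definition comp_le :: "nat list \<Rightarrow> nat list \<Rightarrow> bool" where
  "comp_le \<alpha> \<beta> \<longleftrightarrow> Sset \<beta> \<subseteq> Sset \<alpha>"

definition Mcoef :: "nat list \<Rightarrow> (nat \<Rightarrow> nat) \<Rightarrow> nat" where
  "Mcoef \<alpha> e = (if \<exists>is. length is = length \<alpha> \<and> sorted_wrt (<) is \<and> (\<forall>i\<in>set is. 1 \<le> i)
      \<and> (\<forall>j. e j = (\<Sum>k<length \<alpha>. if is ! k = j then \<alpha> ! k else 0)) then 1 else 0)"

definition pi_comp :: "nat list \<Rightarrow> nat" where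
  "pi_comp \<gamma> = (\<Prod>i<length \<gamma>. psum \<gamma> (Suc i))"

text \<open>alpha^(i): parts of alpha whose blocks lie in the i-th block of beta (i from 0).\<close>
definition subcomp :: "nat list \<Rightarrow> nat list \<Rightarrow> nat \<Rightarrow> nat list" where
  "subcomp \<alpha> \<beta> i = map (nth \<alpha>) (filter (\<lambda>k. psum \<beta> i \<le> psum \<alpha> k \<and> psum \<alpha> (Suc k) \<le> psum \<beta> (Suc i))
      [0..<length \<alpha>])"

definition pi_pair :: "nat list \<Rightarrow> nat list \<Rightarrow> nat" where
  "pi_pair \<alpha> \<beta> = (\<Prod>i<length \<beta>. pi_comp (subcomp \<alpha> \<beta> i))"

definition zee :: "nat list \<Rightarrow> nat" where
  "zee \<alpha> = (\<Prod>i\<in>set \<alpha>. i ^ count_list \<alpha> i * fact (count_list \<alpha> i))"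

definition Psicoef :: "nat \<Rightarrow> nat list \<Rightarrow> (nat \<Rightarrow> nat) \<Rightarrow> rpoly2" where
  "Psicoef n \<alpha> e = const2 (of_nat (zee \<alpha>)) *
     (\<Sum>\<beta>\<in>{\<beta>\<in>comps n. comp_le \<alpha> \<beta>}. const2 (inverse (of_nat (pi_pair \<alpha> \<beta>))) * of_nat (Mcoef \<beta> e))"

definition omega_set :: "nat \<Rightarrow> nat set \<Rightarrow> nat set" where
  "omega_set n S = {1..<n} - (\<lambda>s. n - s) ` S"

end

theory Submission
  imports Defs
begin

text \<open>Expanding \<open>(y+1)^asc (z+1)^inv\<close> edge by edge writes \<open>B_G(x; y+1, z+1)\<close> as a sum, over the
  digraphs \<open>R\<close> obtained by keeping some edges and reversing others, of \<open>y^a z^b\<close> times the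
  generating function of the colourings strictly increasing along \<open>R\<close>. At the monomial \<open>x^\<beta>\<close>
  these colourings are the ordered set partitions of type \<open>\<beta>\<close> all of whose arcs point backwards.
  After \<open>\<omega>\<close>, the coefficient at \<open>x^\<beta>\<close> becomes the signed count \<open>\<Sum> (-1)^(n - \<ell>)\<close> of backward
  ordered set partitions whose type refines \<open>\<beta>\<close>. For acyclic \<open>R\<close> this signed count equals
  \<open>\<Sum> 1/\<pi>(\<alpha>,\<beta>)\<close> over the ordered set partitions of type \<open>\<alpha> \<le> \<beta>\<close> without forward arcs in which
  every block has a root reachable from all of the block: both sides obey the same recursion in
  the first part of \<open>\<beta>\<close>, which reduces to the identities \<open>\<Sum> (-1)^(|X| - \<ell>) = 1\<close> (the first
  block must consist of sinks) and \<open>\<Sum> 1/\<pi> = 1\<close> (the last block must be an ancestor set, and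
  there are \<open>|X|\<close> of them). At \<open>x^\<beta>\<close> the expansion \<open>\<Sum> c\<^sub>\<alpha> \<Psi>\<^sub>\<alpha> / z\<^sub>\<alpha>\<close> is the unitriangular sum of
  \<open>c\<^sub>\<alpha> / \<pi>(\<alpha>,\<beta>)\<close> over \<open>\<alpha> \<le> \<beta>\<close>, so \<open>c\<^sub>\<alpha>\<close> is \<open>\<Sum> y^a z^b\<close> times the number of such rooted ordered
  set partitions of type \<open>\<alpha>\<close>, a polynomial with natural coefficients.\<close>

section \<open>Ordered set partitions\<close>

fun disjoint_blocks :: "'a set list \<Rightarrow> bool" where
  "disjoint_blocks [] = True"
| "disjoint_blocks (B # Bs) \<longleftrightarrow> B \<inter> \<Union>(set Bs) = {} \<and> disjoint_blocks Bs"

definition ord_partitions :: "'a set \<Rightarrow> 'a set list set" where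
  "ord_partitions X = {Bs. {} \<notin> set Bs \<and> disjoint_blocks Bs \<and> \<Union>(set Bs) = X}"

lemma disjoint_blocks_append [simp]:
  "disjoint_blocks (xs @ ys) \<longleftrightarrow> disjoint_blocks xs \<and> disjoint_blocks ys \<and> \<Union>(set xs) \<inter> \<Union>(set ys) = {}"
  by (induction xs) auto

lemma ord_partitions_empty [simp]: "ord_partitions {} = {[]}"
  unfolding ord_partitions_def by (auto, case_tac x, auto)

lemma Nil_in_ord_partitions [simp]: "[] \<in> ord_partitions X \<longleftrightarrow> X = {}"
  by (auto simp: ord_partitions_def)

lemma disjoint_blocks_distinct: "disjoint_blocks xs \<Longrightarrow> {} \<notin> set xs \<Longrightarrow> distinct xs"
  by (induction xs) auto

lemma finite_ord_partitions:
  assumes "finite X"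
  shows "finite (ord_partitions X)"
proof (rule finite_subset)
  show "ord_partitions X \<subseteq> {xs. set xs \<subseteq> Pow X \<and> length xs \<le> card (Pow X)}"
  proof clarify
    fix xs assume xs: "xs \<in> ord_partitions X"
    hence "set xs \<subseteq> Pow X" "distinct xs"
      using disjoint_blocks_distinct by (auto simp: ord_partitions_def)
    thus "set xs \<subseteq> Pow X \<and> length xs \<le> card (Pow X)"
      using assms by (metis distinct_card card_mono finite_Pow_iff)
  qed
  show "finite {xs. set xs \<subseteq> Pow X \<and> length xs \<le> card (Pow X)}"
    using assms by (intro finite_lists_length_le) auto
qed

lemma ord_partition_card_sum:
  "finite X \<Longrightarrow> xs \<in> ord_partitions X \<Longrightarrow> sum_list (map card xs) = card X"
proof (induction xs arbitrary: X)
  case (Cons B xs)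
  hence "xs \<in> ord_partitions (\<Union>(set xs))" "B \<inter> \<Union>(set xs) = {}" "X = B \<union> \<Union>(set xs)"
    by (auto simp: ord_partitions_def)
  moreover have "finite (\<Union>(set xs))" "finite B" using Cons.prems \<open>X = _\<close> by auto
  ultimately show ?case using Cons.IH by (simp add: card_Un_disjoint)
qed (simp add: ord_partitions_def)

lemma ord_partition_cards_pos:
  "finite X \<Longrightarrow> xs \<in> ord_partitions X \<Longrightarrow> \<forall>x\<in>set (map card xs). 0 < x"
  by (auto simp: ord_partitions_def card_gt_0_iff intro: finite_subset)

lemma ord_partition_length_le:
  assumes "finite X" "xs \<in> ord_partitions X"
  shows "length xs \<le> card X"
proof -
  have "sum_list (map (\<lambda>_. 1::nat) xs) \<le> sum_list (map card xs)"
    using ord_partition_cards_pos[OF assms] by (intro sum_list_mono) (auto simp: Suc_le_eq)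
  thus ?thesis using ord_partition_card_sum[OF assms] by (simp add: sum_list_triv)
qed

lemma ord_partitions_append:
  "A \<subseteq> X \<Longrightarrow> xs \<in> ord_partitions A \<Longrightarrow> ys \<in> ord_partitions (X - A) \<Longrightarrow> xs @ ys \<in> ord_partitions X"
  by (auto simp: ord_partitions_def)

lemma ord_partitions_take_drop:
  assumes xs: "xs \<in> ord_partitions X"
  shows "take k xs \<in> ord_partitions (\<Union>(set (take k xs)))"
    and "drop k xs \<in> ord_partitions (X - \<Union>(set (take k xs)))"
proof -
  have "disjoint_blocks (take k xs @ drop k xs)" using xs by (simp add: ord_partitions_def)
  hence d: "disjoint_blocks (take k xs)" "disjoint_blocks (drop k xs)"
    "\<Union>(set (take k xs)) \<inter> \<Union>(set (drop k xs)) = {}"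
    by (simp_all only: disjoint_blocks_append)
  have e: "{} \<notin> set xs" "\<Union>(set xs) = X" using xs by (auto simp: ord_partitions_def)
  have "X = \<Union>(set (take k xs)) \<union> \<Union>(set (drop k xs))"
    using e(2) append_take_drop_id[of k xs] by (metis Union_Un_distrib set_append)
  hence "X - \<Union>(set (take k xs)) = \<Union>(set (drop k xs))" using d(3) by blast
  moreover have "{} \<notin> set (take k xs)" "{} \<notin> set (drop k xs)"
    using e(1) in_set_takeD in_set_dropD by metis+
  ultimately show "take k xs \<in> ord_partitions (\<Union>(set (take k xs)))"
    "drop k xs \<in> ord_partitions (X - \<Union>(set (take k xs)))"
    using d by (simp_all add: ord_partitions_def)
qed

lemma ord_partitions_split_bij:
  "bij_betw (\<lambda>(A, xs, ys). (xs @ ys, length xs))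
     (SIGMA A:Pow X. ord_partitions A \<times> ord_partitions (X - A))
     {(xs, k). xs \<in> ord_partitions X \<and> k \<le> length xs}"
proof (rule bij_betw_byWitness[where f' = "\<lambda>(xs, k). (\<Union>(set (take k xs)), take k xs, drop k xs)"])
  show "(\<lambda>(xs, k). (\<Union>(set (take k xs)), take k xs, drop k xs)) ` {(xs, k). xs \<in> ord_partitions X \<and> k \<le> length xs}
          \<subseteq> (SIGMA A:Pow X. ord_partitions A \<times> ord_partitions (X - A))"
  proof clarsimp
    fix xs k assume xs: "xs \<in> ord_partitions X" and "k \<le> length xs"
    show "\<Union>(set (take k xs)) \<subseteq> X \<and> take k xs \<in> ord_partitions (\<Union>(set (take k xs)))
        \<and> drop k xs \<in> ord_partitions (X - \<Union>(set (take k xs)))"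
      using ord_partitions_take_drop[OF xs] xs by (auto simp: ord_partitions_def dest: in_set_takeD)
  qed
  show "(\<lambda>(A, xs, ys). (xs @ ys, length xs)) ` (SIGMA A:Pow X. ord_partitions A \<times> ord_partitions (X - A))
          \<subseteq> {(xs, k). xs \<in> ord_partitions X \<and> k \<le> length xs}"
    using ord_partitions_append by auto
qed (auto simp: ord_partitions_def)

lemma sum_ord_partitions_split:
  fixes g :: "'a set list \<Rightarrow> 'a set list \<Rightarrow> 'b::comm_monoid_add"
  assumes f: "finite X"
  shows "(\<Sum>xs\<in>ord_partitions X. \<Sum>k\<in>{..length xs}. g (take k xs) (drop k xs))
       = (\<Sum>A\<in>Pow X. \<Sum>xs\<in>ord_partitions A. \<Sum>ys\<in>ord_partitions (X - A). g xs ys)"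
proof -
  have fA: "\<And>A. A \<in> Pow X \<Longrightarrow> finite A" using f by (auto intro: finite_subset)
  have Sigma_eq: "{(xs, k). xs \<in> ord_partitions X \<and> k \<le> length xs} = (SIGMA xs:ord_partitions X. {..length xs})"
    by auto
  have "(\<Sum>A\<in>Pow X. \<Sum>xs\<in>ord_partitions A. \<Sum>ys\<in>ord_partitions (X - A). g xs ys)
      = (\<Sum>(A, xs, ys)\<in>(SIGMA A:Pow X. ord_partitions A \<times> ord_partitions (X - A)). g xs ys)"
    using f fA by (simp add: sum.Sigma sum.cartesian_product finite_ord_partitions split_def)
  also have "\<dots> = (\<Sum>(xs, k)\<in>(SIGMA xs:ord_partitions X. {..length xs}). g (take k xs) (drop k xs))"
    using sum.reindex_bij_betw[OF ord_partitions_split_bij, of "\<lambda>(xs, k). g (take k xs) (drop k xs)" X]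
    by (simp add: case_prod_beta Sigma_eq)
  also have "\<dots> = (\<Sum>xs\<in>ord_partitions X. \<Sum>k\<in>{..length xs}. g (take k xs) (drop k xs))"
    using f by (simp add: sum.Sigma finite_ord_partitions split_def)
  finally show ?thesis by simp
qed

lemma ord_partitions_Cons_bij:
  assumes "X \<noteq> {}"
  shows "bij_betw (\<lambda>(B, Bs). B # Bs) (SIGMA B:Pow X - {{}}. ord_partitions (X - B)) (ord_partitions X)"
proof (rule bij_betw_byWitness[where f' = "\<lambda>Bs. (hd Bs, tl Bs)"])
  have ne: "Bs \<noteq> []" if "Bs \<in> ord_partitions X" for Bs
    using that assms by (auto simp: ord_partitions_def)
  show "\<forall>Bs\<in>ord_partitions X. (\<lambda>(B, Bs). B # Bs) (hd Bs, tl Bs) = Bs"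
    using ne by simp
  show "(\<lambda>Bs. (hd Bs, tl Bs)) ` ord_partitions X \<subseteq> (SIGMA B:Pow X - {{}}. ord_partitions (X - B))"
  proof clarify
    fix Bs assume "Bs \<in> ord_partitions X"
    with ne[of Bs] show "hd Bs \<in> Pow X - {{}} \<and> tl Bs \<in> ord_partitions (X - hd Bs)"
      by (cases Bs) (auto simp: ord_partitions_def)
  qed
  show "(\<lambda>(B, Bs). B # Bs) ` (SIGMA B:Pow X - {{}}. ord_partitions (X - B)) \<subseteq> ord_partitions X"
    by (clarsimp simp: ord_partitions_def) blast
qed simp

lemma ord_partitions_snoc_bij:
  assumes "X \<noteq> {}"
  shows "bij_betw (\<lambda>(B, Bs). Bs @ [B]) (SIGMA B:Pow X - {{}}. ord_partitions (X - B)) (ord_partitions X)"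
proof (rule bij_betw_byWitness[where f' = "\<lambda>Bs. (last Bs, butlast Bs)"])
  have ne: "Bs \<noteq> []" if "Bs \<in> ord_partitions X" for Bs
    using that assms by (auto simp: ord_partitions_def)
  show "\<forall>Bs\<in>ord_partitions X. (\<lambda>(B, Bs). Bs @ [B]) (last Bs, butlast Bs) = Bs"
    using ne by simp
  show "(\<lambda>Bs. (last Bs, butlast Bs)) ` ord_partitions X \<subseteq> (SIGMA B:Pow X - {{}}. ord_partitions (X - B))"
  proof clarify
    fix Bs assume "Bs \<in> ord_partitions X"
    with ne[of Bs] show "last Bs \<in> Pow X - {{}} \<and> butlast Bs \<in> ord_partitions (X - last Bs)"
      by (cases Bs rule: rev_cases) (auto simp: ord_partitions_def)
  qed
  show "(\<lambda>(B, Bs). Bs @ [B]) ` (SIGMA B:Pow X - {{}}. ord_partitions (X - B)) \<subseteq> ord_partitions X"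
    by (clarsimp simp: ord_partitions_def) blast
qed simp

lemma sum_ord_partitions_Cons:
  assumes "finite X" "X \<noteq> {}"
  shows "(\<Sum>Bs\<in>ord_partitions X. f Bs) = (\<Sum>B\<in>Pow X - {{}}. \<Sum>Bs\<in>ord_partitions (X - B). f (B # Bs))"
  using assms sum.reindex_bij_betw[OF ord_partitions_Cons_bij[OF assms(2)], of f, symmetric]
  by (simp add: sum.Sigma finite_ord_partitions split_def)

lemma sum_ord_partitions_snoc:
  assumes "finite X" "X \<noteq> {}"
  shows "(\<Sum>Bs\<in>ord_partitions X. f Bs) = (\<Sum>B\<in>Pow X - {{}}. \<Sum>Bs\<in>ord_partitions (X - B). f (Bs @ [B]))"
  using assms sum.reindex_bij_betw[OF ord_partitions_snoc_bij[OF assms(2)], of f, symmetric]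
  by (simp add: sum.Sigma finite_ord_partitions split_def)

lemma disjoint_blocks_nth: "disjoint_blocks xs \<Longrightarrow> k < length xs \<Longrightarrow> k' < length xs \<Longrightarrow> k \<noteq> k' \<Longrightarrow> xs ! k \<inter> xs ! k' = {}"
proof (induction xs arbitrary: k k')
  case Nil thus ?case by simp
next
  case (Cons B xs)
  show ?case
  proof (cases k)
    case 0
    then obtain k'' where "k' = Suc k''" using Cons by (cases k') auto
    thus ?thesis using Cons 0 by (auto dest!: nth_mem)
  next
    case (Suc kk)
    show ?thesis
    proof (cases k')
      case 0 thus ?thesis using Cons Suc by (auto dest!: nth_mem)
    next
      case (Suc kk') thus ?thesis using Cons \<open>k = Suc kk\<close> by simp
    qed
  qed
qed

lemma disjoint_blocksI: "(\<And>k k'. k < length xs \<Longrightarrow> k' < length xs \<Longrightarrow> k \<noteq> k' \<Longrightarrow> xs ! k \<inter> xs ! k' = {}) \<Longrightarrow> disjoint_blocks xs"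
proof (induction xs)
  case Nil thus ?case by simp
next
  case (Cons B xs)
  have "disjoint_blocks xs"
  proof (rule Cons.IH)
    fix k k' assume "k < length xs" "k' < length xs" "k \<noteq> k'"
    thus "xs ! k \<inter> xs ! k' = {}" using Cons.prems[of "Suc k" "Suc k'"] by simp
  qed
  moreover have "B \<inter> \<Union>(set xs) = {}"
  proof -
    have b: "\<And>k. k < length xs \<Longrightarrow> B \<inter> xs ! k = {}" using Cons.prems[of 0 "Suc k" for k] by simp
    show ?thesis
    proof (rule equals0I)
      fix x assume "x \<in> B \<inter> \<Union>(set xs)"
      then obtain k where "k < length xs" "x \<in> B" "x \<in> xs ! k" by (auto simp: in_set_conv_nth)
      thus False using b by blast
    qed
  qed
  ultimately show ?case by simp
qed

definition block_index :: "'a set list \<Rightarrow> 'a \<Rightarrow> nat" where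
  "block_index xs i = (THE k. k < length xs \<and> i \<in> xs ! k)"

lemma block_index_eq: "xs \<in> ord_partitions V \<Longrightarrow> k < length xs \<Longrightarrow> i \<in> xs ! k \<Longrightarrow> block_index xs i = k"
proof -
  assume xs: "xs \<in> ord_partitions V" and k: "k < length xs" "i \<in> xs ! k"
  have d: "disjoint_blocks xs" using xs by (simp add: ord_partitions_def)
  show "block_index xs i = k" unfolding block_index_def
  proof (rule the_equality)
    show "k < length xs \<and> i \<in> xs ! k" using k by simp
    fix k' assume "k' < length xs \<and> i \<in> xs ! k'"
    thus "k' = k" using disjoint_blocks_nth[OF d, of k k'] k by blast
  qed
qed

lemma block_index_mem: "xs \<in> ord_partitions V \<Longrightarrow> i \<in> V \<Longrightarrow> block_index xs i < length xs \<and> i \<in> xs ! block_index xs i"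
proof -
  assume xs: "xs \<in> ord_partitions V" and i: "i \<in> V"
  then obtain k where "k < length xs" "i \<in> xs ! k" by (auto simp: ord_partitions_def in_set_conv_nth)
  thus ?thesis using block_index_eq[OF xs] by simp
qed

section \<open>Arcs between the blocks of an ordered set partition\<close>

fun arcs_backward :: "('a \<times> 'a) set \<Rightarrow> 'a set list \<Rightarrow> bool" where
  "arcs_backward R [] = True"
| "arcs_backward R (B # xs) \<longleftrightarrow> (\<forall>u\<in>B. \<forall>v\<in>B \<union> \<Union>(set xs). (u, v) \<notin> R) \<and> arcs_backward R xs"

fun no_forward_arcs :: "('a \<times> 'a) set \<Rightarrow> 'a set list \<Rightarrow> bool" where
  "no_forward_arcs R [] = True"
| "no_forward_arcs R (B # xs) \<longleftrightarrow> (\<forall>u\<in>B. \<forall>v\<in>\<Union>(set xs). (u, v) \<notin> R) \<and> no_forward_arcs R xs"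

definition rooted_block :: "('a \<times> 'a) set \<Rightarrow> 'a set \<Rightarrow> bool" where
  "rooted_block R B \<longleftrightarrow> (\<exists>r\<in>B. \<forall>x\<in>B. (x, r) \<in> (R \<inter> B \<times> B)\<^sup>*)"

definition rooted_blocks :: "('a \<times> 'a) set \<Rightarrow> 'a set list \<Rightarrow> bool" where
  "rooted_blocks R xs \<longleftrightarrow> (\<forall>B\<in>set xs. rooted_block R B)"

lemma arcs_backward_append:
  "arcs_backward R (xs @ ys) \<longleftrightarrow>
     arcs_backward R xs \<and> arcs_backward R ys \<and> (\<forall>u\<in>\<Union>(set xs). \<forall>v\<in>\<Union>(set ys). (u, v) \<notin> R)"
proof (induction xs)
  case (Cons B xs)
  show ?case
    using Cons.IH by (simp only: append_Cons arcs_backward.simps set_append Union_Un_distrib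
        list.set Union_insert) blast
qed simp

lemma no_forward_arcs_append:
  "no_forward_arcs R (xs @ ys) \<longleftrightarrow>
     no_forward_arcs R xs \<and> no_forward_arcs R ys \<and> (\<forall>u\<in>\<Union>(set xs). \<forall>v\<in>\<Union>(set ys). (u, v) \<notin> R)"
proof (induction xs)
  case (Cons B xs)
  show ?case
    using Cons.IH by (simp only: append_Cons no_forward_arcs.simps set_append Union_Un_distrib
        list.set Union_insert) blast
qed simp

lemma rooted_blocks_append: "rooted_blocks R (xs @ ys) \<longleftrightarrow> rooted_blocks R xs \<and> rooted_blocks R ys"
  by (auto simp: rooted_blocks_def)

lemma arcs_backward_iff_nth:
  "arcs_backward R xs \<longleftrightarrow> (\<forall>k<length xs. \<forall>k'<length xs. \<forall>u\<in>xs ! k. \<forall>v\<in>xs ! k'. (u, v) \<in> R \<longrightarrow> k' < k)"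
proof (induction xs)
  case (Cons B xs)
  have U: "(\<forall>v\<in>\<Union>(set xs). P v) \<longleftrightarrow> (\<forall>k'<length xs. \<forall>v\<in>xs ! k'. P v)" for P
    by (metis UnionE UnionI in_set_conv_nth)
  show ?case
    unfolding arcs_backward.simps Cons.IH length_Cons All_less_Suc2 nth_Cons_0 nth_Cons_Suc ball_Un U
    by auto
qed simp

lemma arcs_backward_acyclic:
  assumes R: "R \<subseteq> V \<times> V" and xs: "xs \<in> ord_partitions V" and b: "arcs_backward R xs"
  shows "acyclic R"
proof -
  have step: "block_index xs v < block_index xs u" if uv: "(u, v) \<in> R" for u v
  proof -
    have "u \<in> V" "v \<in> V" using uv R by auto
    thus ?thesis using block_index_mem[OF xs] b[unfolded arcs_backward_iff_nth] uv by blast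
  qed
  have "block_index xs v < block_index xs u" if "(u, v) \<in> R\<^sup>+" for u v
    using that by (induction rule: trancl_induct) (auto dest: step)
  thus ?thesis by (auto simp: acyclic_def)
qed

lemma acyclic_has_sink:
  assumes "finite X" "X \<noteq> {}" "acyclic R"
  shows "\<exists>u\<in>X. \<forall>v\<in>X. (u, v) \<notin> R"
proof -
  have "finite (R \<inter> X \<times> X)" using assms(1) by auto
  moreover have "acyclic (R \<inter> X \<times> X)" using assms(3) acyclic_subset by blast
  ultimately have wf: "wf ((R \<inter> X \<times> X)\<inverse>)" by (rule finite_acyclic_wf_converse)
  obtain x where x: "x \<in> X" using assms(2) by blast
  obtain u where "u \<in> X" "\<And>v. (v, u) \<in> (R \<inter> X \<times> X)\<inverse> \<Longrightarrow> v \<notin> X"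
    using wfE_min[OF wf x] by blast
  thus ?thesis by blast
qed

lemma sum_nonempty_subsets_sign:
  assumes "finite S" "S \<noteq> {}"
  shows "(\<Sum>B\<in>Pow S - {{}}. (-1::int) ^ (card B - 1)) = 1"
proof -
  have "(\<Sum>X\<in>Pow S. (-1::int) ^ card X) = (\<Prod>x\<in>S. 1 - 1)"
    using prod_diff_conv_sum[OF assms(1), of "\<lambda>_. 1::int" "\<lambda>_. 1"] by simp
  also have "\<dots> = 0" using assms by (simp add: card_gt_0_iff)
  finally have z: "(\<Sum>X\<in>Pow S. (-1::int) ^ card X) = 0" .
  have "(-1::int) ^ card B = - ((-1) ^ (card B - 1))" if "B \<in> Pow S - {{}}" for B
  proof -
    have "card B \<noteq> 0" using that assms(1) finite_subset by fastforce
    thus ?thesis by (cases "card B") auto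
  qed
  hence "(\<Sum>B\<in>Pow S - {{}}. (-1::int) ^ card B) = - (\<Sum>B\<in>Pow S - {{}}. (-1) ^ (card B - 1))"
    by (simp add: sum_negf)
  moreover have "(\<Sum>X\<in>Pow S. (-1::int) ^ card X) = 1 + (\<Sum>B\<in>Pow S - {{}}. (-1) ^ card B)"
    using assms(1) by (subst sum.remove[of _ "{}"]) auto
  ultimately show ?thesis using z by simp
qed

definition backward_sign_sum :: "('a \<times> 'a) set \<Rightarrow> 'a set \<Rightarrow> int" where
  "backward_sign_sum R X =
     (\<Sum>xs\<in>ord_partitions X. if arcs_backward R xs then (-1) ^ (card X - length xs) else 0)"

lemma backward_sign_sum_first_block:
  assumes X: "finite X" and B: "B \<subseteq> X" "B \<noteq> {}"
  shows "(\<Sum>ys\<in>ord_partitions (X - B).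
            if arcs_backward R (B # ys) then (-1::int) ^ (card X - length (B # ys)) else 0)
       = (if \<forall>u\<in>B. \<forall>v\<in>X. (u, v) \<notin> R then (-1) ^ (card B - 1) * backward_sign_sum R (X - B) else 0)"
proof -
  have fB: "finite B" "finite (X - B)" using B X by (auto intro: finite_subset)
  have cB: "card B \<ge> 1" using B fB by (auto simp: Suc_le_eq card_gt_0_iff)
  have cX: "card X = card B + card (X - B)" using B fB using card_Diff_subset[OF fB(1) B(1)] card_mono[OF X B(1)] by simp
  have "(if arcs_backward R (B # ys) then (-1::int) ^ (card X - length (B # ys)) else 0)
      = (if \<forall>u\<in>B. \<forall>v\<in>X. (u, v) \<notin> R
         then (-1) ^ (card B - 1) * (if arcs_backward R ys then (-1) ^ (card (X - B) - length ys) else 0) else 0)"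
    if ys: "ys \<in> ord_partitions (X - B)" for ys
  proof -
    have "B \<union> \<Union>(set ys) = X" using ys B by (auto simp: ord_partitions_def)
    moreover have "card X - length (B # ys) = (card B - 1) + (card (X - B) - length ys)"
      using cB cX ord_partition_length_le[OF fB(2) ys] by simp
    ultimately show ?thesis by (auto simp: power_add)
  qed
  hence eq: "(\<Sum>ys\<in>ord_partitions (X - B).
            if arcs_backward R (B # ys) then (-1::int) ^ (card X - length (B # ys)) else 0)
      = (\<Sum>ys\<in>ord_partitions (X - B). if \<forall>u\<in>B. \<forall>v\<in>X. (u, v) \<notin> R
         then (-1) ^ (card B - 1) * (if arcs_backward R ys then (-1) ^ (card (X - B) - length ys) else 0) else 0)"
    by (rule sum.cong[OF refl])
  show ?thesis
  proof (cases "\<forall>u\<in>B. \<forall>v\<in>X. (u, v) \<notin> R")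
    case False thus ?thesis using eq unfolding if_not_P[OF False] by simp
  qed (use eq in \<open>simp add: backward_sign_sum_def sum_distrib_left\<close>)
qed

lemma backward_sign_sum_acyclic:
  assumes "finite X" "acyclic R"
  shows "backward_sign_sum R X = 1"
  using assms(1)
proof (induction X rule: finite_psubset_induct)
  case (psubset X)
  show ?case
  proof (cases "X = {}")
    case True thus ?thesis by (simp add: backward_sign_sum_def)
  next
    case False
    define S where "S = {u\<in>X. \<forall>v\<in>X. (u, v) \<notin> R}"
    have S: "finite S" "S \<noteq> {}" "S \<subseteq> X"
      using acyclic_has_sink[OF psubset.hyps False assms(2)] psubset.hyps by (auto simp: S_def)
    have "backward_sign_sum R X = (\<Sum>B\<in>Pow X - {{}}. if B \<subseteq> S then (-1::int) ^ (card B - 1) else 0)"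
      unfolding backward_sign_sum_def sum_ord_partitions_Cons[OF psubset.hyps False]
    proof (rule sum.cong[OF refl])
      fix B assume B: "B \<in> Pow X - {{}}"
      have "(\<Sum>ys\<in>ord_partitions (X - B).
              if arcs_backward R (B # ys) then (-1::int) ^ (card X - length (B # ys)) else 0)
          = (if \<forall>u\<in>B. \<forall>v\<in>X. (u, v) \<notin> R then (-1) ^ (card B - 1) * backward_sign_sum R (X - B) else 0)"
        using B by (intro backward_sign_sum_first_block[OF psubset.hyps]) auto
      also have "\<dots> = (if B \<subseteq> S then (-1) ^ (card B - 1) else 0)"
        using B psubset.IH[of "X - B"] by (auto simp: S_def)
      finally show "(\<Sum>ys\<in>ord_partitions (X - B).
              if arcs_backward R (B # ys) then (-1::int) ^ (card X - length (B # ys)) else 0)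
          = (if B \<subseteq> S then (-1) ^ (card B - 1) else 0)" .
    qed
    also have "\<dots> = (\<Sum>B\<in>Pow S - {{}}. (-1::int) ^ (card B - 1))"
      using S psubset.hyps by (intro sum.mono_neutral_cong_right) auto
    also have "\<dots> = 1" by (rule sum_nonempty_subsets_sign[OF S(1,2)])
    finally show ?thesis .
  qed
qed

definition ancestors :: "('a \<times> 'a) set \<Rightarrow> 'a set \<Rightarrow> 'a \<Rightarrow> 'a set" where
  "ancestors R X r = {x\<in>X. (x, r) \<in> (R \<inter> X \<times> X)\<^sup>*}"

lemma ancestors_subset: "ancestors R X r \<subseteq> X"
  by (auto simp: ancestors_def)

lemma root_in_ancestors: "r \<in> X \<Longrightarrow> r \<in> ancestors R X r"
  by (simp add: ancestors_def)

lemma no_arcs_into_ancestors: "u \<in> X - ancestors R X r \<Longrightarrow> v \<in> ancestors R X r \<Longrightarrow> (u, v) \<notin> R"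
  by (auto simp: ancestors_def intro: converse_rtrancl_into_rtrancl)

lemma rooted_block_ancestors:
  assumes "r \<in> X"
  shows "rooted_block R (ancestors R X r)"
proof -
  let ?B = "ancestors R X r"
  have "(x, r) \<in> (R \<inter> ?B \<times> ?B)\<^sup>*" if "(x, r) \<in> (R \<inter> X \<times> X)\<^sup>*" for x
    using that
  proof (induction rule: converse_rtrancl_induct)
    case (step x y)
    hence "x \<in> ?B" "y \<in> ?B" by (auto simp: ancestors_def intro: converse_rtrancl_into_rtrancl)
    thus ?case using step by (auto intro: converse_rtrancl_into_rtrancl)
  qed simp
  thus ?thesis using root_in_ancestors[OF assms] unfolding rooted_block_def by (auto simp: ancestors_def)
qed

lemma rooted_block_eq_ancestors:
  assumes "B \<subseteq> X" "\<forall>u\<in>X - B. \<forall>v\<in>B. (u, v) \<notin> R" "rooted_block R B"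
  shows "\<exists>r\<in>X. B = ancestors R X r"
proof -
  obtain r where r: "r \<in> B" "\<forall>x\<in>B. (x, r) \<in> (R \<inter> B \<times> B)\<^sup>*"
    using assms(3) by (auto simp: rooted_block_def)
  have "B \<subseteq> ancestors R X r"
  proof
    fix x assume "x \<in> B"
    hence "(x, r) \<in> (R \<inter> B \<times> B)\<^sup>*" using r by auto
      moreover have "R \<inter> B \<times> B \<subseteq> R \<inter> X \<times> X" using assms(1) by auto
    ultimately have "(x, r) \<in> (R \<inter> X \<times> X)\<^sup>*" using rtrancl_mono by blast
    thus "x \<in> ancestors R X r" using \<open>x \<in> B\<close> assms(1) by (auto simp: ancestors_def)
  qed
  moreover have "x \<in> B" if "x \<in> ancestors R X r" for x
  proof -
    have "(x, r) \<in> (R \<inter> X \<times> X)\<^sup>*" using that by (simp add: ancestors_def)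
    thus ?thesis
    proof (induction rule: converse_rtrancl_induct)
      case base thus ?case using r by simp
    next
      case (step x y) thus ?case using assms(2) by blast
    qed
  qed
  ultimately show ?thesis using r assms(1) by blast
qed

lemma inj_on_ancestors:
  assumes "acyclic R"
  shows "inj_on (ancestors R X) X"
proof
  fix r r' assume "r \<in> X" "r' \<in> X" and eq: "ancestors R X r = ancestors R X r'"
  hence "r \<in> ancestors R X r'" "r' \<in> ancestors R X r" using root_in_ancestors by metis+
  hence "(r, r') \<in> (R \<inter> X \<times> X)\<^sup>*" "(r', r) \<in> (R \<inter> X \<times> X)\<^sup>*"
    by (simp_all add: ancestors_def)
  hence "(r, r') \<in> R\<^sup>*" "(r', r) \<in> R\<^sup>*" using rtrancl_mono[of "R \<inter> X \<times> X" R] by auto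
  thus "r = r'"
    using assms by (metis acyclic_def rtrancl_eq_or_trancl trancl_rtrancl_trancl)
qed

text \<open>The blocks that can come last in a rooted ordered set partition without forward arcs.\<close>

lemma closed_rooted_blocks_eq_ancestors:
  "{B\<in>Pow X - {{}}. (\<forall>u\<in>X - B. \<forall>v\<in>B. (u, v) \<notin> R) \<and> rooted_block R B} = ancestors R X ` X"
proof (intro equalityI subsetI)
  fix B assume "B \<in> {B\<in>Pow X - {{}}. (\<forall>u\<in>X - B. \<forall>v\<in>B. (u, v) \<notin> R) \<and> rooted_block R B}"
  thus "B \<in> ancestors R X ` X" using rooted_block_eq_ancestors[of B X R] by blast
next
  fix B assume "B \<in> ancestors R X ` X"
  then obtain r where "r \<in> X" "B = ancestors R X r" by blast
  thus "B \<in> {B\<in>Pow X - {{}}. (\<forall>u\<in>X - B. \<forall>v\<in>B. (u, v) \<notin> R) \<and> rooted_block R B}"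
    using root_in_ancestors[of r X R] ancestors_subset[of R X r] no_arcs_into_ancestors[of _ X R r]
      rooted_block_ancestors[of r X R]
    by blast
qed

lemma psum_snoc_le: "k \<le> length g \<Longrightarrow> psum (g @ [m]) k = psum g k"
  by (simp add: psum_def)

lemma pi_comp_snoc: "pi_comp (g @ [m]) = pi_comp g * (sum_list g + m)"
proof -
  have "pi_comp (g @ [m]) = (\<Prod>i<length g. psum (g @ [m]) (Suc i)) * psum (g @ [m]) (Suc (length g))"
    by (simp add: pi_comp_def)
  also have "\<dots> = pi_comp g * (sum_list g + m)"
    by (simp add: pi_comp_def psum_snoc_le) (simp add: psum_def)
  finally show ?thesis .
qed

definition rooted_weight_sum :: "('a \<times> 'a) set \<Rightarrow> 'a set \<Rightarrow> rat" where
  "rooted_weight_sum R X = (\<Sum>xs\<in>ord_partitions X.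
     if no_forward_arcs R xs \<and> rooted_blocks R xs then 1 / of_nat (pi_comp (map card xs)) else 0)"

lemma rooted_weight_sum_last_block:
  assumes X: "finite X" and B: "B \<subseteq> X" "B \<noteq> {}"
  shows "(\<Sum>ys\<in>ord_partitions (X - B). if no_forward_arcs R (ys @ [B]) \<and> rooted_blocks R (ys @ [B])
            then 1 / of_nat (pi_comp (map card (ys @ [B]))) else 0)
       = (if (\<forall>u\<in>X - B. \<forall>v\<in>B. (u, v) \<notin> R) \<and> rooted_block R B
          then rooted_weight_sum R (X - B) / of_nat (card X) else 0)"
proof -
  have fB: "finite B" "finite (X - B)" using B X by (auto intro: finite_subset)
  have cX: "card X = card (X - B) + card B" using B fB using card_Diff_subset[OF fB(1) B(1)] card_mono[OF X B(1)] by simp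
  have "(if no_forward_arcs R (ys @ [B]) \<and> rooted_blocks R (ys @ [B])
            then 1 / of_nat (pi_comp (map card (ys @ [B]))) else 0)
      = (if (\<forall>u\<in>X - B. \<forall>v\<in>B. (u, v) \<notin> R) \<and> rooted_block R B
         then (if no_forward_arcs R ys \<and> rooted_blocks R ys then 1 / of_nat (pi_comp (map card ys)) else 0)
              / of_nat (card X)
         else (0::rat))"
    if ys: "ys \<in> ord_partitions (X - B)" for ys
  proof -
    have "\<Union>(set ys) = X - B" using ys by (auto simp: ord_partitions_def)
    moreover have "pi_comp (map card (ys @ [B])) = pi_comp (map card ys) * card X"
      using pi_comp_snoc[of "map card ys" "card B"] ord_partition_card_sum[OF fB(2) ys] cX by simp
    ultimately show ?thesis
      by (auto simp: no_forward_arcs_append rooted_blocks_append rooted_blocks_def)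
  qed
  hence eq: "(\<Sum>ys\<in>ord_partitions (X - B). if no_forward_arcs R (ys @ [B]) \<and> rooted_blocks R (ys @ [B])
            then 1 / of_nat (pi_comp (map card (ys @ [B]))) else 0)
      = (\<Sum>ys\<in>ord_partitions (X - B). if (\<forall>u\<in>X - B. \<forall>v\<in>B. (u, v) \<notin> R) \<and> rooted_block R B
         then (if no_forward_arcs R ys \<and> rooted_blocks R ys then 1 / of_nat (pi_comp (map card ys)) else 0)
              / of_nat (card X)
         else (0::rat))"
    by (rule sum.cong[OF refl])
  show ?thesis
  proof (cases "(\<forall>u\<in>X - B. \<forall>v\<in>B. (u, v) \<notin> R) \<and> rooted_block R B")
    case False thus ?thesis using eq unfolding if_not_P[OF False] by simp
  qed (use eq in \<open>simp add: rooted_weight_sum_def sum_divide_distrib\<close>)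
qed

lemma rooted_weight_sum_acyclic:
  assumes "finite X" "acyclic R"
  shows "rooted_weight_sum R X = 1"
  using assms(1)
proof (induction X rule: finite_psubset_induct)
  case (psubset X)
  show ?case
  proof (cases "X = {}")
    case True thus ?thesis by (simp add: rooted_weight_sum_def pi_comp_def rooted_blocks_def)
  next
    case False
    let ?C = "\<lambda>B. (\<forall>u\<in>X - B. \<forall>v\<in>B. (u, v) \<notin> R) \<and> rooted_block R B"
    have "rooted_weight_sum R X = (\<Sum>B\<in>Pow X - {{}}. if ?C B then 1 / of_nat (card X) else 0)"
      unfolding rooted_weight_sum_def sum_ord_partitions_snoc[OF psubset.hyps False]
    proof (rule sum.cong[OF refl])
      fix B assume B: "B \<in> Pow X - {{}}"
      have "(\<Sum>ys\<in>ord_partitions (X - B). if no_forward_arcs R (ys @ [B]) \<and> rooted_blocks R (ys @ [B])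
              then 1 / of_nat (pi_comp (map card (ys @ [B]))) else 0)
          = (if ?C B then rooted_weight_sum R (X - B) / of_nat (card X) else (0::rat))"
        using B by (intro rooted_weight_sum_last_block[OF psubset.hyps]) auto
      also have "\<dots> = (if ?C B then 1 / of_nat (card X) else 0)"
        using B psubset.IH[of "X - B"] by auto
      finally show "(\<Sum>ys\<in>ord_partitions (X - B). if no_forward_arcs R (ys @ [B]) \<and> rooted_blocks R (ys @ [B])
              then 1 / of_nat (pi_comp (map card (ys @ [B]))) else 0)
          = (if ?C B then 1 / of_nat (card X) else (0::rat))" .
    qed
    also have "\<dots> = (\<Sum>B\<in>{B\<in>Pow X - {{}}. ?C B}. 1 / of_nat (card X))"
      using psubset.hyps by (intro sum.inter_filter[symmetric]) auto
    also have "\<dots> = (\<Sum>B\<in>ancestors R X ` X. 1 / of_nat (card X))"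
      unfolding closed_rooted_blocks_eq_ancestors ..
    also have "\<dots> = 1"
      using card_image[OF inj_on_ancestors[OF assms(2)]] False psubset.hyps by simp
    finally show ?thesis .
  qed
qed

section \<open>Compositions\<close>

lemma comps_pos: "g \<in> comps n \<Longrightarrow> \<forall>x\<in>set g. 0 < x"
  by (simp add: comps_def)

lemma comps_sum: "g \<in> comps n \<Longrightarrow> sum_list g = n"
  by (simp add: comps_def)

lemma pos_sum_list_eq_0_imp_Nil: "\<forall>x\<in>set g. (0::nat) < x \<Longrightarrow> sum_list g = 0 \<Longrightarrow> g = []"
  by (cases g) auto

lemma sum_take_mono: "k \<le> k' \<Longrightarrow> sum_list (take k (g::nat list)) \<le> sum_list (take k' g)"
proof -
  assume "k \<le> k'"
  then obtain m where "k' = k + m" using le_Suc_ex by blast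
  thus ?thesis by (simp add: take_add)
qed

lemma sum_take_strict:
  assumes pos: "\<forall>x\<in>set g. (0::nat) < x" and "k < k'" "k' \<le> length g"
  shows "sum_list (take k g) < sum_list (take k' g)"
proof -
  have "k < length g" using assms by simp
  hence "sum_list (take (Suc k) g) = sum_list (take k g) + g ! k"
    by (simp add: take_Suc_conv_app_nth)
  moreover have "g ! k > 0" using pos \<open>k < length g\<close> by simp
  moreover have "sum_list (take (Suc k) g) \<le> sum_list (take k' g)" using assms by (intro sum_take_mono) simp
  ultimately show ?thesis by simp
qed

lemma sum_take_inj:
  assumes pos: "\<forall>x\<in>set g. (0::nat) < x" and "k \<le> length g" "k' \<le> length g"
    and "sum_list (take k g) = sum_list (take k' g)"
  shows "k = k'"
  using sum_take_strict[OF pos, of k k'] sum_take_strict[OF pos, of k' k] assms by (cases "k < k'"; cases "k' < k") auto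

lemma psum_append_le: "k \<le> length g1 \<Longrightarrow> psum (g1 @ g2) k = psum g1 k"
  by (simp add: psum_def)

lemma psum_append_ge: "psum (g1 @ g2) (length g1 + k) = sum_list g1 + psum g2 k"
  by (simp add: psum_def)

lemma psum_lt_sum:
  assumes "\<forall>x\<in>set g. (0::nat) < x" "k < length g"
  shows "psum g k < sum_list g"
  using sum_take_strict[OF assms(1), of k "length g"] assms by (simp add: psum_def)

lemma psum_le_sum: "psum g k \<le> sum_list (g::nat list)"
  using sum_take_mono[of k "length g" g] by (cases "k \<le> length g") (auto simp: psum_def)

lemma psum_Suc_pos:
  assumes "\<forall>x\<in>set g. (0::nat) < x" "k < length g"
  shows "0 < psum g (Suc k)"
proof -
  have "psum g (Suc k) = psum g k + g ! k" using assms(2) by (simp add: psum_def take_Suc_conv_app_nth)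
  thus ?thesis using assms by simp
qed

lemma psum_add: "psum a (k + m) = psum a k + psum (drop k a) m"
  by (simp add: psum_def take_add)

lemma psum_mono: "k \<le> k' \<Longrightarrow> psum g k \<le> psum (g::nat list) k'"
  by (simp add: psum_def sum_take_mono)

lemma psum_rev: "k \<le> length g \<Longrightarrow> psum (rev g) k = sum_list g - psum g (length g - k)"
proof -
  assume k: "k \<le> length g"
  have "psum (rev g) k = sum_list (drop (length g - k) g)" by (simp add: psum_def take_rev)
  also have "\<dots> = sum_list g - psum g (length g - k)"
    using append_take_drop_id[of "length g - k" g] sum_list_append[of "take (length g - k) g" "drop (length g - k) g"]
    by (simp add: psum_def)
  finally show ?thesis .
qed

lemma comps_len: "a \<in> comps n \<Longrightarrow> length a \<le> n"
proof -
  assume a: "a \<in> comps n"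
  have "sum_list (map (\<lambda>_. 1::nat) a) \<le> sum_list a"
    using comps_pos[OF a] sum_list_mono[of a "\<lambda>_. 1::nat" "\<lambda>x. x"] by (simp add: Suc_le_eq)
  thus ?thesis using comps_sum[OF a] by (simp add: sum_list_triv)
qed

lemma Sset_pos: "\<forall>x\<in>set g. (0::nat) < x \<Longrightarrow> s \<in> Sset g \<Longrightarrow> 0 < s \<and> s < sum_list g"
proof -
  assume pos: "\<forall>x\<in>set g. (0::nat) < x" and "s \<in> Sset g"
  then obtain i where i: "1 \<le> i" "i < length g" "s = psum g i" by (auto simp: Sset_def)
  then obtain i' where "i = Suc i'" by (cases i) auto
  thus "0 < s \<and> s < sum_list g" using psum_Suc_pos[OF pos, of i'] psum_lt_sum[OF pos, of i] i by simp
qed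

lemma Sset_Cons: "Sset (b # bs) = (if bs = [] then {} else insert b ((+) b ` Sset bs))"
proof (cases "bs = []")
  case False
  hence "{1..<length (b # bs)} = insert 1 (Suc ` {1..<length bs})"
    by (auto simp: image_iff)
  moreover have "psum (b # bs) (Suc i) = b + psum bs i" for i by (simp add: psum_def)
  ultimately have "Sset (b # bs) = insert (psum (b # bs) 1) ((\<lambda>i. b + psum bs i) ` {1..<length bs})"
    unfolding Sset_def by (simp only: image_insert image_image)
  thus ?thesis using False by (simp add: Sset_def image_image psum_def)
qed (simp add: Sset_def)

lemma card_Sset: "\<forall>x\<in>set g. (0::nat) < x \<Longrightarrow> card (Sset g) = length g - 1"
proof -
  assume pos: "\<forall>x\<in>set g. (0::nat) < x"
  have "inj_on (psum g) {1..<length g}"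
    by (rule inj_onI) (use sum_take_inj[OF pos] in \<open>auto simp: psum_def\<close>)
  thus ?thesis by (simp add: Sset_def card_image)
qed

lemma Sset_sub: "g \<in> comps n \<Longrightarrow> Sset g \<subseteq> {1..<n}"
  using Sset_pos[OF comps_pos] comps_sum by fastforce

fun refines :: "nat list \<Rightarrow> nat list \<Rightarrow> bool" where
  "refines g [] = (g = [])"
| "refines g (b # bs) = (\<exists>k. 0 < k \<and> k \<le> length g \<and> sum_list (take k g) = b \<and> refines (drop k g) bs)"

lemma refines_imp_Sset_subset:
  assumes "refines a g" "\<forall>x\<in>set a. 0 < x" "\<forall>x\<in>set g. 0 < x" "sum_list a = sum_list g"
  shows "Sset g \<subseteq> Sset a"
  using assms
proof (induction g arbitrary: a)
  case (Cons b bs)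
  then obtain k where k: "0 < k" "k \<le> length a" "sum_list (take k a) = b" "refines (drop k a) bs"
    by auto
  have pbs: "\<forall>x\<in>set bs. 0 < x" using Cons.prems by simp
  have sd: "sum_list (drop k a) = sum_list bs"
    using Cons.prems(4) k(3) append_take_drop_id[of k a] sum_list_append[of "take k a" "drop k a"] by simp
  have IH: "Sset bs \<subseteq> Sset (drop k a)"
    using Cons.IH[OF k(4) _ pbs sd] Cons.prems(2) by (auto dest: in_set_dropD)
  show ?case
  proof (cases "bs = []")
    case False
    hence "drop k a \<noteq> []" using sd pbs by (cases bs) auto
    hence "b \<in> Sset a" using k by (auto simp: Sset_def psum_def intro!: image_eqI[of _ _ k])
    moreover have "(+) b ` Sset bs \<subseteq> Sset a"
    proof
      fix x assume "x \<in> (+) b ` Sset bs"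
      then obtain s where s: "s \<in> Sset (drop k a)" "x = b + s" using IH by auto
      then obtain m where m: "1 \<le> m" "m < length (drop k a)" "s = psum (drop k a) m"
        by (auto simp: Sset_def)
      hence "x = psum a (k + m)" using psum_add[of a k m] k(3) s(2) by (simp add: psum_def)
      moreover have "k + m \<in> {1..<length a}" using m k by auto
      ultimately show "x \<in> Sset a" by (auto simp: Sset_def)
    qed
    ultimately show ?thesis using False by (simp add: Sset_Cons)
  qed (simp add: Sset_Cons)
qed (simp add: Sset_def)

lemma Sset_subset_imp_refines:
  assumes "Sset g \<subseteq> Sset a" "\<forall>x\<in>set a. 0 < x" "\<forall>x\<in>set g. 0 < x" "sum_list a = sum_list g"
  shows "refines a g"
  using assms
proof (induction g arbitrary: a)
  case Nil
  thus ?case using pos_sum_list_eq_0_imp_Nil by simp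
next
  case (Cons b bs)
  have pb: "0 < b" and pbs: "\<forall>x\<in>set bs. 0 < x" using Cons.prems by auto
  show ?case
  proof (cases "bs = []")
    case True
    hence "sum_list a = b" using Cons.prems(4) by simp
    thus ?thesis using True pb by (cases a) (auto intro!: exI[of _ "length a"])
  next
    case False
    hence sub: "b \<in> Sset a" "(+) b ` Sset bs \<subseteq> Sset a" using Cons.prems(1) by (simp_all add: Sset_Cons)
    then obtain k where k: "1 \<le> k" "k < length a" "psum a k = b" by (auto simp: Sset_def)
    have sd: "sum_list (drop k a) = sum_list bs"
      using Cons.prems(4) k(3) append_take_drop_id[of k a] sum_list_append[of "take k a" "drop k a"]
      by (simp add: psum_def)
    have "Sset bs \<subseteq> Sset (drop k a)"
    proof
      fix s assume s: "s \<in> Sset bs"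
      have "b + s \<in> Sset a" using sub(2) s by blast
      then obtain k' where k': "1 \<le> k'" "k' < length a" "psum a k' = b + s"
        by (auto simp: Sset_def)
      have "k < k'"
        using psum_mono[of k' k a] k'(3) k(3) Sset_pos[OF pbs s] by (cases "k < k'") auto
      then obtain m where m: "k' = k + m" "1 \<le> m" by (metis less_imp_add_positive One_nat_def Suc_leI)
      have "s = psum (drop k a) m" using psum_add[of a k m] k'(3) m k(3) by simp
      moreover have "m \<in> {1..<length (drop k a)}" using m k' by auto
      ultimately show "s \<in> Sset (drop k a)" by (auto simp: Sset_def)
    qed
    hence "refines (drop k a) bs" using Cons.IH[OF _ _ pbs sd] Cons.prems(2) by (auto dest: in_set_dropD)
    thus ?thesis using k by (auto simp: psum_def intro!: exI[of _ k])
  qed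
qed

lemma refines_iff:
  assumes "\<forall>x\<in>set a. 0 < x" "\<forall>x\<in>set g. 0 < x" "sum_list a = sum_list g"
  shows "refines a g \<longleftrightarrow> Sset g \<subseteq> Sset a"
  using refines_imp_Sset_subset Sset_subset_imp_refines assms by blast

lemma refines_len: "refines a g \<Longrightarrow> length g \<le> length a"
proof (induction g arbitrary: a)
  case Nil thus ?case by simp
next
  case (Cons b bs)
  then obtain k where "0 < k" "k \<le> length a" "refines (drop k a) bs" by auto
  thus ?case using Cons.IH by fastforce
qed

lemma refines_eq_len: "refines a g \<Longrightarrow> length a = length g \<Longrightarrow> a = g"
proof (induction g arbitrary: a)
  case Nil thus ?case by simp
next
  case (Cons b bs)
  then obtain k where k: "0 < k" "k \<le> length a" "sum_list (take k a) = b" "refines (drop k a) bs" by auto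
  have "length bs \<le> length (drop k a)" using refines_len[OF k(4)] .
  hence "k = 1" using k Cons.prems(2) by simp
  hence "drop 1 a = bs" using Cons.IH[OF k(4)[unfolded \<open>k = 1\<close>]] Cons.prems(2) by simp
  moreover have "a \<noteq> []" using k by auto
  ultimately show ?case using k(3) \<open>k = 1\<close> by (cases a) auto
qed

lemma Sset_inj: "a \<in> comps n \<Longrightarrow> g \<in> comps n \<Longrightarrow> Sset a = Sset g \<Longrightarrow> a = g"
proof -
  assume a: "a \<in> comps n" and g: "g \<in> comps n" and e: "Sset a = Sset g"
  have "refines a g" using refines_iff[OF comps_pos[OF a] comps_pos[OF g]] comps_sum[OF a] comps_sum[OF g] e by simp
  moreover have "length a = length g"
  proof (cases "n = 0")
    case True thus ?thesis using a g pos_sum_list_eq_0_imp_Nil[OF comps_pos[OF a]] pos_sum_list_eq_0_imp_Nil[OF comps_pos[OF g]] comps_sum[OF a] comps_sum[OF g] by simp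
  next
    case False
    hence "a \<noteq> []" "g \<noteq> []" using comps_sum[OF a] comps_sum[OF g] by (metis sum_list.Nil)+
    thus ?thesis using card_Sset[OF comps_pos[OF a]] card_Sset[OF comps_pos[OF g]] e by (cases a; cases g) auto
  qed
  ultimately show "a = g" by (rule refines_eq_len)
qed

lemma Sset_surj: "U \<subseteq> {1..<n} \<Longrightarrow> \<exists>g\<in>comps n. Sset g = U"
proof (induction n arbitrary: U rule: less_induct)
  case (less n)
  show ?case
  proof (cases "U = {}")
    case True
    show ?thesis
    proof (cases "n = 0")
      case True thus ?thesis using \<open>U = {}\<close> by (intro bexI[of _ "[]"]) (auto simp: comps_def Sset_def)
    next
      case False thus ?thesis using \<open>U = {}\<close> by (intro bexI[of _ "[n]"]) (auto simp: comps_def Sset_def)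
    qed
  next
    case False
    define m where "m = Min U"
    have fU: "finite U" using less.prems finite_subset by auto
    have mU: "m \<in> U" using False fU by (simp add: m_def)
    have mle: "\<And>u. u \<in> U \<Longrightarrow> m \<le> u" using fU by (simp add: m_def)
    have m1: "1 \<le> m" "m < n" using mU less.prems by auto
    define U' where "U' = (\<lambda>u. u - m) ` (U - {m})"
    have U'sub: "U' \<subseteq> {1..<n - m}"
    proof
      fix x assume "x \<in> U'"
      then obtain u where u: "u \<in> U" "u \<noteq> m" "x = u - m" by (auto simp: U'_def)
      have "m < u" using mle[OF u(1)] u(2) by simp
      moreover have "u < n" using u(1) less.prems by auto
      ultimately show "x \<in> {1..<n - m}" using u(3) by auto
    qed
    obtain g' where g': "g' \<in> comps (n - m)" "Sset g' = U'" using less.IH[of "n - m" U'] U'sub m1 by auto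
    have g'ne: "g' \<noteq> []" using comps_sum[OF g'(1)] m1 by auto
    have "Sset (m # g') = insert m ((+) m ` U')" using g'ne g'(2) by (simp add: Sset_Cons)
    also have "(+) m ` U' = U - {m}"
    proof -
      have "(+) m ` U' = (\<lambda>u. m + (u - m)) ` (U - {m})" by (simp add: U'_def image_image)
      also have "\<dots> = U - {m}" using mle by (intro image_cong_simp[THEN trans[OF _ image_ident]]) auto
      finally show ?thesis .
    qed
    also have "insert m (U - {m}) = U" using mU by auto
    finally have "Sset (m # g') = U" .
    moreover have "m # g' \<in> comps n" using g'(1) m1 by (auto simp: comps_def)
    ultimately show ?thesis by blast
  qed
qed

lemma Sset_bij: "bij_betw Sset (comps n) (Pow {1..<n})"
proof (rule bij_betwI')
  show "\<And>x y. x \<in> comps n \<Longrightarrow> y \<in> comps n \<Longrightarrow> (Sset x = Sset y) = (x = y)" using Sset_inj by blast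
  show "\<And>x. x \<in> comps n \<Longrightarrow> Sset x \<in> Pow {1..<n}" using Sset_sub by blast
  show "\<And>y. y \<in> Pow {1..<n} \<Longrightarrow> \<exists>x\<in>comps n. y = Sset x" using Sset_surj by (metis PowD)
qed

lemma finite_comps: "finite (comps n)"
  using bij_betw_finite[OF Sset_bij] by simp

lemma Sset_rev: "Sset (rev g) = (\<lambda>s. sum_list g - s) ` Sset g"
proof
  show "Sset (rev g) \<subseteq> (\<lambda>s. sum_list g - s) ` Sset g"
  proof
    fix x assume "x \<in> Sset (rev g)"
    then obtain k where k: "1 \<le> k" "k < length g" "x = psum (rev g) k" by (auto simp: Sset_def)
    hence "x = sum_list g - psum g (length g - k)" using psum_rev by simp
    moreover have "length g - k \<in> {1..<length g}" using k by auto
    ultimately show "x \<in> (\<lambda>s. sum_list g - s) ` Sset g" by (auto simp: Sset_def)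
  qed
  show "(\<lambda>s. sum_list g - s) ` Sset g \<subseteq> Sset (rev g)"
  proof
    fix x assume "x \<in> (\<lambda>s. sum_list g - s) ` Sset g"
    then obtain k where k: "1 \<le> k" "k < length g" "x = sum_list g - psum g k" by (auto simp: Sset_def)
    hence "x = psum (rev g) (length g - k)" using psum_rev[of "length g - k" g] by simp
    moreover have "length g - k \<in> {1..<length g}" using k by auto
    ultimately show "x \<in> Sset (rev g)" by (auto simp: Sset_def)
  qed
qed

lemma inj_on_image_subset_iff: "inj_on f (A \<union> B) \<Longrightarrow> (f ` A \<subseteq> f ` B) = (A \<subseteq> B)"
  unfolding inj_on_def by blast

lemma comp_le_rev:
  assumes a: "a \<in> comps n" and g: "g \<in> comps n"
  shows "comp_le (rev a) (rev g) = comp_le a g"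
proof -
  have "Sset a \<union> Sset g \<subseteq> {..n}" using Sset_sub[OF a] Sset_sub[OF g] by auto
  moreover have "inj_on (\<lambda>s. n - s) {..n}" by (rule inj_onI) auto
  ultimately have "inj_on (\<lambda>s. n - s) (Sset a \<union> Sset g)" by (rule inj_on_subset[rotated])
  thus ?thesis unfolding comp_le_def Sset_rev comps_sum[OF a] comps_sum[OF g]
    using inj_on_image_subset_iff[of "\<lambda>s. n - s" "Sset g" "Sset a"] by (simp add: Un_commute)
qed

lemma refines_comp_le:
  "a \<in> comps n \<Longrightarrow> b \<in> comps n \<Longrightarrow> refines a b = comp_le a b"
  using refines_iff[OF comps_pos comps_pos] comps_sum by (simp add: comp_le_def)

lemma strict_finer_len:
  assumes a: "a \<in> comps n" and b: "b \<in> comps n" and le: "comp_le a b" and ne: "a \<noteq> b"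
  shows "length b < length a"
proof -
  have "Sset b \<subset> Sset a" using le ne Sset_inj[OF a b] by (auto simp: comp_le_def)
  moreover have "finite (Sset a)" using Sset_sub[OF a] finite_subset by blast
  ultimately have "card (Sset b) < card (Sset a)" by (rule psubset_card_mono[rotated])
  hence "length b - 1 < length a - 1" using card_Sset[OF comps_pos[OF a]] card_Sset[OF comps_pos[OF b]] by simp
  thus ?thesis by simp
qed

lemma ord_partition_type_comps: "xs \<in> ord_partitions {1..n} \<Longrightarrow> map card xs \<in> comps n"
  using ord_partition_cards_pos[of "{1..n}" xs] ord_partition_card_sum[of "{1..n}" xs] by (simp add: comps_def)

lemma upt_length_append:
  "[0..<length (xs @ ys)] = [0..<length xs] @ map ((+) (length xs)) [0..<length ys]"
proof -
  have "map ((+) (length xs)) [0..<length ys] = [length xs..<length xs + length ys]"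
    by (rule nth_equalityI) auto
  thus ?thesis using upt_add_eq_append[of 0 "length xs" "length ys"] by simp
qed

lemma subcomp_append_Cons:
  assumes p1: "\<forall>x\<in>set g1. (0::nat) < x" and p2: "\<forall>x\<in>set g2. (0::nat) < x" and s: "sum_list g1 = b"
  shows "subcomp (g1 @ g2) (b # bs) 0 = g1" "subcomp (g1 @ g2) (b # bs) (Suc i) = subcomp g2 bs i"
proof -
  let ?a = "g1 @ g2" and ?c = "b # bs"
  let ?P = "\<lambda>i k. psum ?c i \<le> psum ?a k \<and> psum ?a (Suc k) \<le> psum ?c (Suc i)"
  have in_g1: "psum ?a k = psum g1 k" "psum ?a (Suc k) = psum g1 (Suc k)" "?a ! k = g1 ! k"
    if "k < length g1" for k
    using that by (simp_all add: psum_append_le nth_append)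
  have in_g2: "psum ?a (length g1 + k) = b + psum g2 k" "psum ?a (Suc (length g1 + k)) = b + psum g2 (Suc k)"
    "?a ! (length g1 + k) = g2 ! k" for k
    using psum_append_ge[of g1 g2 k] psum_append_ge[of g1 g2 "Suc k"] s by simp_all
  have c: "psum ?c 0 = 0" "psum bs 0 = 0" "psum ?c (Suc i) = b + psum bs i" for i
    by (simp_all add: psum_def)
  have "filter (?P 0) [0..<length ?a] = [0..<length g1]"
  proof -
    have "filter (?P 0) [0..<length g1] = [0..<length g1]"
      using in_g1 c s psum_le_sum[of g1] by (intro filter_True) (auto simp: psum_def)
    moreover have "\<not> ?P 0 (length g1 + k)" if "k < length g2" for k
      using psum_Suc_pos[OF p2 that] in_g2[of k] c by simp
    hence "filter (?P 0) (map ((+) (length g1)) [0..<length g2]) = []"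
      by (simp add: filter_map o_def filter_False)
    ultimately show ?thesis by (simp only: upt_length_append filter_append) simp
  qed
  hence "subcomp ?a ?c 0 = map (nth g1) [0..<length g1]" by (simp add: subcomp_def in_g1)
  thus "subcomp ?a ?c 0 = g1" by (simp add: map_nth)
  have "\<not> ?P (Suc i) k" if "k < length g1" for k
    using psum_lt_sum[OF p1 that] s in_g1[OF that] c(3)[of i] by simp
  hence "filter (?P (Suc i)) [0..<length g1] = []" by (intro filter_False) auto
  moreover have "filter (?P (Suc i)) (map ((+) (length g1)) [0..<length g2])
      = map ((+) (length g1)) (filter (\<lambda>k. psum bs i \<le> psum g2 k \<and> psum g2 (Suc k) \<le> psum bs (Suc i)) [0..<length g2])"
    by (simp add: filter_map o_def in_g2 c)
  ultimately have "filter (?P (Suc i)) [0..<length ?a] = map ((+) (length g1))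
      (filter (\<lambda>k. psum bs i \<le> psum g2 k \<and> psum g2 (Suc k) \<le> psum bs (Suc i)) [0..<length g2])"
    by (simp only: upt_length_append filter_append) simp
  thus "subcomp ?a ?c (Suc i) = subcomp g2 bs i" by (simp add: subcomp_def in_g2)
qed

lemma pi_pair_append_Cons:
  assumes p1: "\<forall>x\<in>set g1. (0::nat) < x" and p2: "\<forall>x\<in>set g2. (0::nat) < x" and s: "sum_list g1 = b"
  shows "pi_pair (g1 @ g2) (b # bs) = pi_comp g1 * pi_pair g2 bs"
proof -
  have "pi_pair (g1 @ g2) (b # bs) = (\<Prod>i<Suc (length bs). pi_comp (subcomp (g1 @ g2) (b # bs) i))"
    by (simp add: pi_pair_def)
  also have "\<dots> = pi_comp (subcomp (g1 @ g2) (b # bs) 0) * (\<Prod>i<length bs. pi_comp (subcomp (g1 @ g2) (b # bs) (Suc i)))"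
    by (rule prod.lessThan_Suc_shift)
  also have "\<dots> = pi_comp g1 * pi_pair g2 bs"
    using subcomp_append_Cons[OF p1 p2 s] by (simp add: pi_pair_def)
  finally show ?thesis .
qed

lemma pi_comp_pos: "\<forall>x\<in>set g. (0::nat) < x \<Longrightarrow> 0 < pi_comp g"
  by (simp add: pi_comp_def psum_Suc_pos)

lemma pi_pair_pos: "\<forall>x\<in>set a. (0::nat) < x \<Longrightarrow> 0 < pi_pair a b"
proof -
  assume pos: "\<forall>x\<in>set a. (0::nat) < x"
  have "\<And>i. \<forall>x\<in>set (subcomp a b i). 0 < x" using pos by (auto simp: subcomp_def)
  thus ?thesis by (simp add: pi_pair_def pi_comp_pos)
qed

lemma zee_pos: "\<forall>x\<in>set a. (0::nat) < x \<Longrightarrow> 0 < zee a"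
  by (simp add: zee_def)

section \<open>Signed and weighted sums over ordered set partitions refining a composition\<close>

lemma sum_if_unique:
  assumes "finite K" "\<And>k k'. k \<in> K \<Longrightarrow> k' \<in> K \<Longrightarrow> C k \<Longrightarrow> C k' \<Longrightarrow> k = k'"
  shows "(\<Sum>k\<in>K. if C k then a else 0) = (if \<exists>k\<in>K. C k then a else (0::'b::comm_monoid_add))"
proof (cases "\<exists>k\<in>K. C k")
  case True
  then obtain k0 where k0: "k0 \<in> K" "C k0" by blast
  have "(\<Sum>k\<in>K. if C k then a else 0) = (\<Sum>k\<in>K. if k = k0 then a else 0)"
    using assms(2) k0 by (intro sum.cong) auto
  also have "\<dots> = a" using assms(1) k0 by simp
  finally show ?thesis using True by simp
next
  case False thus ?thesis by (auto intro: sum.neutral)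
qed

lemma sum_ord_partitions_refines_Cons:
  fixes \<Phi> :: "nat set list \<Rightarrow> 'b::comm_monoid_add"
  assumes f: "finite X"
  shows "(\<Sum>xs\<in>ord_partitions X. if refines (map card xs) (b # bs) then \<Phi> xs else 0)
       = (\<Sum>A\<in>Pow X. \<Sum>xs1\<in>ord_partitions A. \<Sum>xs2\<in>ord_partitions (X - A).
            if xs1 \<noteq> [] \<and> card A = b \<and> refines (map card xs2) bs then \<Phi> (xs1 @ xs2) else 0)"
proof -
  define g where "g = (\<lambda>xs1 xs2. if xs1 \<noteq> [] \<and> sum_list (map card xs1) = b \<and> refines (map card xs2) bs then \<Phi> (xs1 @ xs2) else 0)"
  have "(\<Sum>xs\<in>ord_partitions X. if refines (map card xs) (b # bs) then \<Phi> xs else 0)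
      = (\<Sum>xs\<in>ord_partitions X. \<Sum>k\<in>{..length xs}. g (take k xs) (drop k xs))"
  proof (rule sum.cong[OF refl])
    fix xs assume xs: "xs \<in> ord_partitions X"
    have pos: "\<forall>x\<in>set (map card xs). 0 < x" by (rule ord_partition_cards_pos[OF f xs])
    let ?C = "\<lambda>k. 0 < k \<and> sum_list (take k (map card xs)) = b \<and> refines (drop k (map card xs)) bs"
    have "(\<Sum>k\<in>{..length xs}. g (take k xs) (drop k xs)) = (\<Sum>k\<in>{..length xs}. if ?C k then \<Phi> xs else 0)"
      by (intro sum.cong refl) (auto simp: g_def take_map drop_map)
    also have "\<dots> = (if \<exists>k\<in>{..length xs}. ?C k then \<Phi> xs else 0)"
      by (rule sum_if_unique) (use sum_take_inj[OF pos] in auto)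
    also have "(\<exists>k\<in>{..length xs}. ?C k) = refines (map card xs) (b # bs)" by auto
    finally show "(if refines (map card xs) (b # bs) then \<Phi> xs else 0) = (\<Sum>k\<in>{..length xs}. g (take k xs) (drop k xs))" by simp
  qed
  also have "\<dots> = (\<Sum>A\<in>Pow X. \<Sum>xs1\<in>ord_partitions A. \<Sum>xs2\<in>ord_partitions (X - A). g xs1 xs2)"
    by (rule sum_ord_partitions_split[OF f])
  also have "\<dots> = (\<Sum>A\<in>Pow X. \<Sum>xs1\<in>ord_partitions A. \<Sum>xs2\<in>ord_partitions (X - A).
            if xs1 \<noteq> [] \<and> card A = b \<and> refines (map card xs2) bs then \<Phi> (xs1 @ xs2) else 0)"
  proof (intro sum.cong refl)
    fix A xs1 xs2 assume "A \<in> Pow X" "xs1 \<in> ord_partitions A"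
    hence "sum_list (map card xs1) = card A" using f by (intro ord_partition_card_sum) (auto intro: finite_subset)
    thus "g xs1 xs2 = (if xs1 \<noteq> [] \<and> card A = b \<and> refines (map card xs2) bs then \<Phi> (xs1 @ xs2) else 0)"
      by (simp add: g_def)
  qed
  finally show ?thesis .
qed

definition backward_sum :: "(nat \<times> nat) set \<Rightarrow> nat set \<Rightarrow> nat list \<Rightarrow> int" where
  "backward_sum R X \<beta> = (\<Sum>xs\<in>ord_partitions X. if refines (map card xs) \<beta> then
      (if arcs_backward R xs then (-1) ^ (card X - length xs) else 0) else 0)"

definition rooted_sum :: "(nat \<times> nat) set \<Rightarrow> nat set \<Rightarrow> nat list \<Rightarrow> rat" where
  "rooted_sum R X \<beta> = (\<Sum>xs\<in>ord_partitions X. if refines (map card xs) \<beta> then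
      (if no_forward_arcs R xs \<and> rooted_blocks R xs then 1 / of_nat (pi_pair (map card xs) \<beta>) else 0) else 0)"

definition no_arcs :: "(nat \<times> nat) set \<Rightarrow> nat set \<Rightarrow> nat set \<Rightarrow> bool" where
  "no_arcs R A C = (\<forall>u\<in>A. \<forall>v\<in>C. (u, v) \<notin> R)"

lemma backward_sum_Cons:
  assumes f: "finite X" and b: "0 < b" and ac: "acyclic R"
  shows "backward_sum R X (b # bs)
       = (\<Sum>A\<in>Pow X. if card A = b \<and> no_arcs R A (X - A) then backward_sum R (X - A) bs else 0)"
proof -
  let ?\<Phi> = "\<lambda>Y xs. if arcs_backward R xs then (-1::int) ^ (card Y - length xs) else 0"
  have "backward_sum R X (b # bs) = (\<Sum>A\<in>Pow X. \<Sum>xs\<in>ord_partitions A. \<Sum>ys\<in>ord_partitions (X - A).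
          if xs \<noteq> [] \<and> card A = b \<and> refines (map card ys) bs then ?\<Phi> X (xs @ ys) else 0)"
    unfolding backward_sum_def by (rule sum_ord_partitions_refines_Cons[OF f])
  also have "\<dots> = (\<Sum>A\<in>Pow X. if card A = b \<and> no_arcs R A (X - A) then backward_sum R (X - A) bs else 0)"
  proof (rule sum.cong[OF refl])
    fix A assume "A \<in> Pow X"
    hence A: "A \<subseteq> X" "finite A" "finite (X - A)" using f by (auto intro: finite_subset)
    let ?C = "card A = b \<and> no_arcs R A (X - A)"
    have "(if xs \<noteq> [] \<and> card A = b \<and> refines (map card ys) bs then ?\<Phi> X (xs @ ys) else 0)
        = (if ?C then ?\<Phi> A xs * (if refines (map card ys) bs then ?\<Phi> (X - A) ys else 0) else 0)"
      if xs: "xs \<in> ord_partitions A" and ys: "ys \<in> ord_partitions (X - A)" for xs ys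
    proof -
      have u: "\<Union>(set xs) = A" "\<Union>(set ys) = X - A" using xs ys by (auto simp: ord_partitions_def)
      have "card X - length (xs @ ys) = (card A - length xs) + (card (X - A) - length ys)"
        using ord_partition_length_le[OF A(2) xs] ord_partition_length_le[OF A(3) ys]
          card_Diff_subset[OF A(2,1)] card_mono[OF f A(1)] by simp
      moreover have "card A = b \<Longrightarrow> xs \<noteq> []" using b xs by auto
      ultimately show ?thesis
        using u by (auto simp: arcs_backward_append no_arcs_def power_add)
    qed
    note pointwise = this
    show "(\<Sum>xs\<in>ord_partitions A. \<Sum>ys\<in>ord_partitions (X - A).
              if xs \<noteq> [] \<and> card A = b \<and> refines (map card ys) bs then ?\<Phi> X (xs @ ys) else 0)
        = (if ?C then backward_sum R (X - A) bs else 0)"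
    proof (cases ?C)
      case True
      hence "(\<Sum>xs\<in>ord_partitions A. \<Sum>ys\<in>ord_partitions (X - A).
              if xs \<noteq> [] \<and> card A = b \<and> refines (map card ys) bs then ?\<Phi> X (xs @ ys) else 0)
          = backward_sign_sum R A * backward_sum R (X - A) bs"
        using pointwise by (simp add: backward_sign_sum_def backward_sum_def sum_product cong: sum.cong)
      thus ?thesis using True backward_sign_sum_acyclic[OF A(2) ac] by simp
    next
      case False
      show ?thesis unfolding if_not_P[OF False] using pointwise[unfolded if_not_P[OF False]] by (simp cong: sum.cong)
    qed
  qed
  finally show ?thesis .
qed

lemma rooted_sum_Cons:
  assumes f: "finite X" and b: "0 < b" and ac: "acyclic R"
  shows "rooted_sum R X (b # bs)
       = (\<Sum>A\<in>Pow X. if card A = b \<and> no_arcs R A (X - A) then rooted_sum R (X - A) bs else 0)"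
proof -
  let ?w = "\<lambda>xs p. if no_forward_arcs R xs \<and> rooted_blocks R xs then 1 / of_nat p else (0::rat)"
  let ?\<Phi> = "\<lambda>xs. ?w xs (pi_pair (map card xs) (b # bs))"
  have "rooted_sum R X (b # bs) = (\<Sum>A\<in>Pow X. \<Sum>xs\<in>ord_partitions A. \<Sum>ys\<in>ord_partitions (X - A).
          if xs \<noteq> [] \<and> card A = b \<and> refines (map card ys) bs then ?\<Phi> (xs @ ys) else 0)"
    unfolding rooted_sum_def by (rule sum_ord_partitions_refines_Cons[OF f])
  also have "\<dots> = (\<Sum>A\<in>Pow X. if card A = b \<and> no_arcs R A (X - A) then rooted_sum R (X - A) bs else 0)"
  proof (rule sum.cong[OF refl])
    fix A assume "A \<in> Pow X"
    hence A: "A \<subseteq> X" "finite A" "finite (X - A)" using f by (auto intro: finite_subset)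
    let ?C = "card A = b \<and> no_arcs R A (X - A)"
    have pointwise: "(if xs \<noteq> [] \<and> card A = b \<and> refines (map card ys) bs then ?\<Phi> (xs @ ys) else 0)
        = (if ?C then ?w xs (pi_comp (map card xs))
             * (if refines (map card ys) bs then ?w ys (pi_pair (map card ys) bs) else 0) else 0)"
      if xs: "xs \<in> ord_partitions A" and ys: "ys \<in> ord_partitions (X - A)" for xs ys
    proof -
      have u: "\<Union>(set xs) = A" "\<Union>(set ys) = X - A" using xs ys by (auto simp: ord_partitions_def)
      have "card A = b \<Longrightarrow> xs \<noteq> []" using b xs by auto
      moreover have "card A = b \<Longrightarrow> pi_pair (map card (xs @ ys)) (b # bs)
          = pi_comp (map card xs) * pi_pair (map card ys) bs"
        using pi_pair_append_Cons[OF ord_partition_cards_pos[OF A(2) xs] ord_partition_cards_pos[OF A(3) ys]]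
          ord_partition_card_sum[OF A(2) xs] by simp
      ultimately show ?thesis
        using u by (auto simp: no_forward_arcs_append rooted_blocks_append no_arcs_def)
    qed
    show "(\<Sum>xs\<in>ord_partitions A. \<Sum>ys\<in>ord_partitions (X - A).
              if xs \<noteq> [] \<and> card A = b \<and> refines (map card ys) bs then ?\<Phi> (xs @ ys) else 0)
        = (if ?C then rooted_sum R (X - A) bs else 0)"
    proof (cases ?C)
      case True
      hence "(\<Sum>xs\<in>ord_partitions A. \<Sum>ys\<in>ord_partitions (X - A).
              if xs \<noteq> [] \<and> card A = b \<and> refines (map card ys) bs then ?\<Phi> (xs @ ys) else 0)
          = rooted_weight_sum R A * rooted_sum R (X - A) bs"
        using pointwise by (simp add: rooted_weight_sum_def rooted_sum_def sum_product cong: sum.cong)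
      thus ?thesis using True rooted_weight_sum_acyclic[OF A(2) ac] by simp
    next
      case False
      show ?thesis unfolding if_not_P[OF False] using pointwise[unfolded if_not_P[OF False]] by (simp cong: sum.cong)
    qed
  qed
  finally show ?thesis .
qed

lemma backward_sum_eq_rooted_sum:
  assumes "finite X" "acyclic R" "\<forall>b\<in>set \<beta>. 0 < b"
  shows "of_int (backward_sum R X \<beta>) = rooted_sum R X \<beta>"
  using assms(1,3)
proof (induction \<beta> arbitrary: X)
  case Nil
  have "backward_sum R X [] = (if X = {} then 1 else 0)"
  proof -
    have "backward_sum R X [] = (\<Sum>xs\<in>ord_partitions X. if xs = [] then 1 else 0)"
      unfolding backward_sum_def by (intro sum.cong refl) auto
    also have "\<dots> = (if X = {} then 1 else 0)" using Nil by (simp add: finite_ord_partitions)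
    finally show ?thesis .
  qed
  moreover have "rooted_sum R X [] = (if X = {} then 1 else 0)"
  proof -
    have "rooted_sum R X [] = (\<Sum>xs\<in>ord_partitions X. if xs = [] then 1 else 0)"
      unfolding rooted_sum_def by (intro sum.cong refl) (auto simp: pi_pair_def rooted_blocks_def)
    also have "\<dots> = (if X = {} then 1 else 0)" using Nil by (simp add: finite_ord_partitions)
    finally show ?thesis .
  qed
  ultimately show ?case by simp
next
  case (Cons b bs)
  have b: "0 < b" using Cons by simp
  have fA: "\<And>A. A \<in> Pow X \<Longrightarrow> finite (X - A)" using Cons by auto
  have "of_int (backward_sum R X (b # bs)) = (\<Sum>A\<in>Pow X. of_int (if card A = b \<and> no_arcs R A (X - A) then backward_sum R (X - A) bs else 0) :: rat)"
    unfolding backward_sum_Cons[OF Cons(2) b assms(2)] by (rule of_int_sum)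
  also have "\<dots> = (\<Sum>A\<in>Pow X. if card A = b \<and> no_arcs R A (X - A) then rooted_sum R (X - A) bs else 0)"
  proof (rule sum.cong[OF refl])
    fix A assume "A \<in> Pow X"
    hence "of_int (backward_sum R (X - A) bs) = rooted_sum R (X - A) bs" using Cons.IH fA Cons(3) by simp
    thus "(of_int (if card A = b \<and> no_arcs R A (X - A) then backward_sum R (X - A) bs else 0) :: rat)
        = (if card A = b \<and> no_arcs R A (X - A) then rooted_sum R (X - A) bs else 0)" by simp
  qed
  also have "\<dots> = rooted_sum R X (b # bs)" by (rule rooted_sum_Cons[OF Cons(2) b assms(2), symmetric])
  finally show ?case .
qed

lemma backward_sum_cyclic:
  assumes "R \<subseteq> V \<times> V" "\<not> acyclic R"
  shows "backward_sum R V b = 0"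
  unfolding backward_sum_def using arcs_backward_acyclic[OF assms(1)] assms(2) by (intro sum.neutral) auto

text \<open>Colour classes are listed from the largest colour down, hence the reversed type.\<close>

definition typed_partitions :: "nat \<Rightarrow> nat list \<Rightarrow> nat set list set" where
  "typed_partitions n g = {xs\<in>ord_partitions {1..n}. map card xs = rev g}"

lemma length_typed_partition: "xs \<in> typed_partitions n g \<Longrightarrow> length xs = length g"
  by (auto simp: typed_partitions_def dest: arg_cong[where f = length])

lemma backward_sum_by_type:
  assumes b: "b \<in> comps n"
  shows "backward_sum R {1..n} b = (\<Sum>g\<in>{g\<in>comps n. comp_le g (rev b)}. (-1) ^ (n - length g) * int (card {xs\<in>typed_partitions n g. arcs_backward R xs}))"
proof -
  let ?f = "\<lambda>xs. if refines (map card xs) b then (if arcs_backward R xs then (-1::int) ^ (card {1..n} - length xs) else 0) else 0"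
  have rb: "rev b \<in> comps n" using b by (simp add: comps_def)
  have fo: "finite (ord_partitions {1..n})" by (simp add: finite_ord_partitions)
  have "backward_sum R {1..n} b = (\<Sum>g\<in>comps n. \<Sum>xs\<in>{xs\<in>ord_partitions {1..n}. rev (map card xs) = g}. ?f xs)"
    unfolding backward_sum_def
    by (rule sum.group[symmetric]) (use fo finite_comps ord_partition_type_comps in \<open>auto simp: comps_def\<close>)
  also have "\<dots> = (\<Sum>g\<in>comps n. if comp_le g (rev b) then (-1) ^ (n - length g) * int (card {xs\<in>typed_partitions n g. arcs_backward R xs}) else 0)"
  proof (rule sum.cong[OF refl])
    fix g assume g: "g \<in> comps n"
    have "(\<Sum>xs\<in>{xs\<in>ord_partitions {1..n}. rev (map card xs) = g}. ?f xs)
        = (\<Sum>xs\<in>typed_partitions n g. if comp_le g (rev b) then (if arcs_backward R xs then (-1::int) ^ (n - length g) else 0) else 0)"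
    proof (rule sum.cong)
      show "{xs\<in>ord_partitions {1..n}. rev (map card xs) = g} = typed_partitions n g" by (auto simp: typed_partitions_def)
      fix xs assume xs: "xs \<in> typed_partitions n g"
      have mc: "map card xs = rev g" and o: "xs \<in> ord_partitions {1..n}" using xs by (auto simp: typed_partitions_def)
      have rg: "rev g \<in> comps n" using g by (simp add: comps_def)
      have "refines (map card xs) b = comp_le (rev g) b" using refines_comp_le[OF rg b] mc by simp
      also have "\<dots> = comp_le g (rev b)" using comp_le_rev[OF g rb] by simp
      finally show "?f xs = (if comp_le g (rev b) then (if arcs_backward R xs then (-1::int) ^ (n - length g) else 0) else 0)"
        using length_typed_partition[OF xs] by simp
    qed
    also have "\<dots> = (if comp_le g (rev b) then (-1) ^ (n - length g) * int (card {xs\<in>typed_partitions n g. arcs_backward R xs}) else 0)"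
    proof -
      have fO: "finite (typed_partitions n g)" using fo by (simp add: typed_partitions_def)
      have "(\<Sum>xs\<in>typed_partitions n g. if arcs_backward R xs then (-1::int) ^ (n - length g) else 0) = (\<Sum>xs\<in>{xs\<in>typed_partitions n g. arcs_backward R xs}. (-1::int) ^ (n - length g))"
        by (rule sum.inter_filter[symmetric, OF fO])
      thus ?thesis by simp
    qed
    finally show "(\<Sum>xs\<in>{xs\<in>ord_partitions {1..n}. rev (map card xs) = g}. ?f xs) = \<dots>" .
  qed
  also have "\<dots> = (\<Sum>g\<in>{g\<in>comps n. comp_le g (rev b)}. (-1) ^ (n - length g) * int (card {xs\<in>typed_partitions n g. arcs_backward R xs}))"
    using finite_comps by (simp add: sum.inter_filter)
  finally show ?thesis .
qed

definition rooted_count :: "(nat \<times> nat) set \<Rightarrow> nat \<Rightarrow> nat list \<Rightarrow> nat" where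
  "rooted_count R n a = card {xs\<in>ord_partitions {1..n}. map card xs = a \<and> no_forward_arcs R xs \<and> rooted_blocks R xs}"

lemma rooted_sum_by_type:
  assumes b: "b \<in> comps n"
  shows "rooted_sum R {1..n} b = (\<Sum>a\<in>comps n. if comp_le a b then of_nat (rooted_count R n a) * inverse (of_nat (pi_pair a b)) else 0)"
proof -
  let ?f = "\<lambda>xs. if refines (map card xs) b then (if no_forward_arcs R xs \<and> rooted_blocks R xs then 1 / of_nat (pi_pair (map card xs) b) else 0) else (0::rat)"
  have fo: "finite (ord_partitions {1..n})" by (simp add: finite_ord_partitions)
  have "rooted_sum R {1..n} b = (\<Sum>a\<in>comps n. \<Sum>xs\<in>{xs\<in>ord_partitions {1..n}. map card xs = a}. ?f xs)"
    unfolding rooted_sum_def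
    by (rule sum.group[symmetric]) (use fo finite_comps ord_partition_type_comps in auto)
  also have "\<dots> = (\<Sum>a\<in>comps n. if comp_le a b then of_nat (rooted_count R n a) * inverse (of_nat (pi_pair a b)) else 0)"
  proof (rule sum.cong[OF refl])
    fix a assume a: "a \<in> comps n"
    have fA: "finite {xs\<in>ord_partitions {1..n}. map card xs = a}" using fo by simp
    have "(\<Sum>xs\<in>{xs\<in>ord_partitions {1..n}. map card xs = a}. ?f xs)
        = (\<Sum>xs\<in>{xs\<in>ord_partitions {1..n}. map card xs = a}. if comp_le a b then (if no_forward_arcs R xs \<and> rooted_blocks R xs then inverse (of_nat (pi_pair a b)) else 0) else 0)"
      using refines_comp_le[OF a b] by (intro sum.cong refl) (auto simp: inverse_eq_divide)
    also have "\<dots> = (if comp_le a b then (\<Sum>xs\<in>{xs\<in>ord_partitions {1..n}. map card xs = a}. if no_forward_arcs R xs \<and> rooted_blocks R xs then inverse (of_nat (pi_pair a b)) else 0) else 0)"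
      by simp
    also have "(\<Sum>xs\<in>{xs\<in>ord_partitions {1..n}. map card xs = a}. if no_forward_arcs R xs \<and> rooted_blocks R xs then inverse (of_nat (pi_pair a b)) else (0::rat))
        = of_nat (rooted_count R n a) * inverse (of_nat (pi_pair a b))"
    proof -
      have "(\<Sum>xs\<in>{xs\<in>ord_partitions {1..n}. map card xs = a}. if no_forward_arcs R xs \<and> rooted_blocks R xs then inverse (of_nat (pi_pair a b)) else (0::rat))
          = (\<Sum>xs\<in>{xs\<in>{xs\<in>ord_partitions {1..n}. map card xs = a}. no_forward_arcs R xs \<and> rooted_blocks R xs}. inverse (of_nat (pi_pair a b)))"
        by (rule sum.inter_filter[symmetric, OF fA])
      also have "{xs\<in>{xs\<in>ord_partitions {1..n}. map card xs = a}. no_forward_arcs R xs \<and> rooted_blocks R xs} = {xs\<in>ord_partitions {1..n}. map card xs = a \<and> no_forward_arcs R xs \<and> rooted_blocks R xs}"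
        by auto
      finally show ?thesis by (simp add: rooted_count_def)
    qed
    finally show "(\<Sum>xs\<in>{xs\<in>ord_partitions {1..n}. map card xs = a}. ?f xs) = (if comp_le a b then of_nat (rooted_count R n a) * inverse (of_nat (pi_pair a b)) else 0)" by simp
  qed
  finally show ?thesis .
qed

section \<open>Quasisymmetric coefficients at a composition monomial\<close>

definition comp_exp :: "nat list \<Rightarrow> nat \<Rightarrow> nat" where
  "comp_exp g j = (if 1 \<le> j \<and> j \<le> length g then g ! (j - 1) else 0)"

lemma sorted_nth_le_iff:
  "sorted js \<Longrightarrow> p < length js \<Longrightarrow> (js ! p \<le> (v::nat)) = (p < length (filter (\<lambda>x. x \<le> v) js))"
proof (induction js arbitrary: p)
  case Nil thus ?case by simp
next
  case (Cons x xs)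
  have xle: "\<forall>y\<in>set xs. x \<le> y" using Cons.prems(1) by simp
  show ?case
  proof (cases "x \<le> v")
    case True
    show ?thesis
    proof (cases p)
      case 0 thus ?thesis using True by simp
    next
      case (Suc p') thus ?thesis using Cons True by simp
    qed
  next
    case False
    hence "filter (\<lambda>x. x \<le> v) xs = []" using xle by (auto simp: filter_empty_conv)
    moreover have "(x # xs) ! p > v"
    proof (cases p)
      case 0 thus ?thesis using False by simp
    next
      case (Suc p')
      hence "xs ! p' \<in> set xs" using Cons.prems(2) by simp
      thus ?thesis using Suc xle False by fastforce
    qed
    ultimately show ?thesis using False by simp
  qed
qed

lemma sorted_strict_step_iff:
  assumes "sorted js" "0 < i" "i < length js"
  shows "(js ! (i - 1) < js ! i) = (\<exists>v. length (filter (\<lambda>x. x \<le> (v::nat)) js) = i)"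
proof
  assume lt: "js ! (i - 1) < js ! i"
  let ?v = "js ! (i - 1)"
  have "i - 1 < length (filter (\<lambda>x. x \<le> ?v) js)" using sorted_nth_le_iff[OF assms(1), of "i - 1" ?v] assms by simp
  moreover have "\<not> i < length (filter (\<lambda>x. x \<le> ?v) js)" using sorted_nth_le_iff[OF assms(1), of i ?v] assms lt by simp
  ultimately show "\<exists>v. length (filter (\<lambda>x. x \<le> v) js) = i" by (intro exI[of _ ?v]) simp
next
  assume "\<exists>v. length (filter (\<lambda>x. x \<le> v) js) = i"
  then obtain v where v: "length (filter (\<lambda>x. x \<le> v) js) = i" by blast
  have "js ! (i - 1) \<le> v" using sorted_nth_le_iff[OF assms(1), of "i - 1" v] assms v by simp
  moreover have "\<not> js ! i \<le> v" using sorted_nth_le_iff[OF assms(1), of i v] assms v by simp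
  ultimately show "js ! (i - 1) < js ! i" by simp
qed

lemma length_filter_le_count: "length (filter (\<lambda>x. x \<le> v) js) = (\<Sum>j\<le>v. count_list js (j::nat))"
proof (induction js)
  case Nil thus ?case by simp
next
  case (Cons a js)
  have "(\<Sum>j\<le>v. count_list (a # js) j) = (\<Sum>j\<le>v. count_list js j + (if a = j then 1 else 0))"
    by (intro sum.cong refl) simp
  also have "\<dots> = (\<Sum>j\<le>v. count_list js j) + (\<Sum>j\<le>v. if a = j then 1 else 0)"
    by (rule sum.distrib)
  also have "(\<Sum>j\<le>v. if a = j then 1 else 0) = (if a \<le> v then 1 else (0::nat))"
    by (subst sum.delta') auto
  finally show ?case using Cons by simp
qed

lemma sum_comp_exp: "(\<Sum>j\<le>v. comp_exp g j) = psum g (min v (length g))"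
proof (induction v)
  case 0 thus ?case by (simp add: comp_exp_def psum_def)
next
  case (Suc v)
  have "(\<Sum>j\<le>Suc v. comp_exp g j) = psum g (min v (length g)) + comp_exp g (Suc v)" using Suc by simp
  also have "\<dots> = psum g (min (Suc v) (length g))"
  proof (cases "Suc v \<le> length g")
    case True
    hence "take (Suc v) g = take v g @ [g ! v]" by (simp add: take_Suc_conv_app_nth)
    thus ?thesis using True by (simp add: comp_exp_def psum_def min_def)
  next
    case False thus ?thesis by (simp add: comp_exp_def min_def psum_def)
  qed
  finally show ?case .
qed

fun comp_word :: "nat \<Rightarrow> nat list \<Rightarrow> nat list" where
  "comp_word s [] = []"
| "comp_word s (g # gs) = replicate g s @ comp_word (Suc s) gs"

lemma comp_word_ge: "x \<in> set (comp_word s gs) \<Longrightarrow> s \<le> x"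
  by (induction gs arbitrary: s) (auto dest: Suc_leD)

lemma sorted_comp_word: "sorted (comp_word s gs)"
  by (induction gs arbitrary: s) (auto simp: sorted_append dest: comp_word_ge)

lemma length_comp_word: "length (comp_word s gs) = sum_list gs"
  by (induction gs arbitrary: s) auto

lemma count_comp_word: "count_list (comp_word s gs) j = (if s \<le> j \<and> j < s + length gs then gs ! (j - s) else 0)"
proof (induction gs arbitrary: s)
  case Nil thus ?case by simp
next
  case (Cons g gs)
  have "count_list (replicate g s) j = (if j = s then g else 0)"
    by (induction g) auto
  thus ?case using Cons[of "Suc s"] by (auto simp: nth_Cons')
qed

lemma count_comp_word_Suc_0: "count_list (comp_word (Suc 0) g) j = comp_exp g j"
  by (simp add: count_comp_word comp_exp_def)

lemma sorted_eq_by_count: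
  assumes "sorted xs" "sorted ys" "\<forall>j. count_list xs j = count_list ys (j::nat)"
  shows "xs = ys"
proof -
  have "mset xs = mset ys" using assms(3) by (simp add: multiset_eq_iff count_mset)
  thus ?thesis using assms(1,2) by (metis properties_for_sort sorted_sort_id)
qed

lemma mem_Sset_iff:
  assumes pos: "\<forall>x\<in>set g. 0 < x" and "0 < i" "i < sum_list g"
  shows "(i \<in> Sset g) = (\<exists>v. psum g (min v (length g)) = i)"
proof
  assume "i \<in> Sset g"
  then obtain k where "k \<in> {1..<length g}" "psum g k = i" by (auto simp: Sset_def)
  thus "\<exists>v. psum g (min v (length g)) = i" by (intro exI[of _ k]) simp
next
  assume "\<exists>v. psum g (min v (length g)) = i"
  then obtain v where v: "psum g (min v (length g)) = i" by blast
  let ?k = "min v (length g)"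
  have "?k \<noteq> 0"
  proof
    assume "?k = 0" hence "psum g ?k = 0" by (simp add: psum_def)
    thus False using v assms(2) by simp
  qed
  moreover have "?k \<noteq> length g"
  proof
    assume "?k = length g" hence "psum g ?k = sum_list g" by (simp add: psum_def)
    thus False using v assms(3) by simp
  qed
  ultimately show "i \<in> Sset g" using v by (auto simp: Sset_def)
qed

lemma Fcoef_comp_exp:
  assumes g: "g \<in> comps n" and S: "S \<subseteq> {1..<n}"
  shows "Fcoef n S (comp_exp g) = (if S \<subseteq> Sset g then 1 else 0)"
proof -
  have pos: "\<forall>x\<in>set g. 0 < x" and sg: "sum_list g = n" using g by (auto simp: comps_def)
  let ?L = "comp_word (Suc 0) g"
  let ?P = "\<lambda>js. length js = n \<and> sorted js \<and> (\<forall>j\<in>set js. 1 \<le> j) \<and> (\<forall>j. count_list js j = comp_exp g j)"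
  have L_sat: "?P ?L" using sorted_comp_word length_comp_word count_comp_word_Suc_0 sg comp_word_ge by auto
  have uniq: "\<And>js. ?P js \<Longrightarrow> js = ?L"
  proof -
    fix js assume P: "?P js"
    have "\<forall>j. count_list js j = count_list ?L j" using P count_comp_word_Suc_0 by simp
    thus "js = ?L" using sorted_eq_by_count[of js ?L] P sorted_comp_word by blast
  qed
  have step: "\<And>i. i \<in> S \<Longrightarrow> (?L ! (i - 1) < ?L ! i) = (i \<in> Sset g)"
  proof -
    fix i assume "i \<in> S"
    hence i: "0 < i" "i < n" using S by auto
    have "(?L ! (i - 1) < ?L ! i) = (\<exists>v. length (filter (\<lambda>x. x \<le> v) ?L) = i)"
      using sorted_strict_step_iff[OF sorted_comp_word i(1)] i length_comp_word sg by simp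
    also have "\<dots> = (\<exists>v. psum g (min v (length g)) = i)"
      by (simp add: length_filter_le_count count_comp_word_Suc_0 sum_comp_exp)
    also have "\<dots> = (i \<in> Sset g)" using mem_Sset_iff[OF pos] i sg by simp
    finally show "(?L ! (i - 1) < ?L ! i) = (i \<in> Sset g)" .
  qed
  have "{js. length js = n \<and> sorted js \<and> (\<forall>j\<in>set js. 1 \<le> j) \<and> (\<forall>i\<in>S. js ! (i - 1) < js ! i)
      \<and> (\<forall>j. count_list js j = comp_exp g j)} = {js. js = ?L \<and> (\<forall>i\<in>S. js ! (i - 1) < js ! i)}"
    using L_sat uniq by blast
  also have "\<dots> = (if S \<subseteq> Sset g then {?L} else {})" using step by auto
  finally show ?thesis by (simp add: Fcoef_def)
qed

lemma comp_exp_monomial_eq: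
  assumes pa: "\<forall>x\<in>set a. 0 < x" and pg: "\<forall>x\<in>set g. 0 < x"
    and ix: "length ix = length a" "sorted_wrt (<) ix"
    and e: "\<forall>j. comp_exp g j = (\<Sum>k<length a. if ix ! k = j then a ! k else 0)"
  shows "a = g"
proof -
  have dist: "distinct ix" using ix(2) by (simp add: strict_sorted_iff)
  have val: "comp_exp g (ix ! k) = a ! k" if k: "k < length a" for k
  proof -
    have "comp_exp g (ix ! k) = (\<Sum>k'<length a. if ix ! k' = ix ! k then a ! k' else 0)" using e by blast
    also have "\<dots> = (\<Sum>k'<length a. if k' = k then a ! k' else 0)"
      using dist ix(1) k by (intro sum.cong refl) (simp add: nth_eq_iff_index_eq)
    finally show ?thesis using k by simp
  qed
  have "set ix = {1..length g}"
  proof (intro equalityI subsetI)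
    fix j assume "j \<in> set ix"
    then obtain k where "k < length a" "ix ! k = j" using ix(1) by (auto simp: in_set_conv_nth)
    hence "0 < comp_exp g j" using val pa by auto
    thus "j \<in> {1..length g}" by (auto simp: comp_exp_def split: if_splits)
  next
    fix j assume "j \<in> {1..length g}"
    hence "comp_exp g j \<noteq> 0" using pg by (auto simp: comp_exp_def)
    hence "(\<Sum>k<length a. if ix ! k = j then a ! k else 0) \<noteq> 0" using e by simp
    then obtain k where "k < length a" "ix ! k = j"
      by (auto elim: sum.not_neutral_contains_not_neutral split: if_splits)
    thus "j \<in> set ix" using ix(1) by auto
  qed
  hence "set ix = set [1..<Suc (length g)]" by (simp add: atLeastLessThanSuc_atLeastAtMost del: upt_Suc)
  hence ixs: "ix = [1..<Suc (length g)]" by (rule strict_sorted_equal[OF sorted_wrt_upt ix(2)])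
  hence "length a = length g" using ix(1) by (simp del: upt_Suc)
  moreover have "a ! k = g ! k" if "k < length a" for k
    using val[OF that] ixs \<open>length a = length g\<close> that by (simp add: comp_exp_def del: upt_Suc)
  ultimately show "a = g" by (rule nth_equalityI)
qed

lemma Mcoef_comp_exp:
  assumes pa: "\<forall>x\<in>set a. 0 < x" and pg: "\<forall>x\<in>set g. 0 < x"
  shows "Mcoef a (comp_exp g) = (if a = g then 1 else 0)"
proof -
  let ?Q = "\<lambda>ix. length ix = length a \<and> sorted_wrt (<) ix \<and> (\<forall>i\<in>set ix. 1 \<le> i)
      \<and> (\<forall>j. comp_exp g j = (\<Sum>k<length a. if ix ! k = j then a ! k else 0))"
  have "(\<exists>ix. ?Q ix) = (a = g)"
  proof
    assume "\<exists>ix. ?Q ix"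
    thus "a = g" using comp_exp_monomial_eq[OF pa pg] by blast
  next
    assume ag: "a = g"
    let ?ixs = "[1..<Suc (length g)]"
    have "?Q ?ixs"
    proof (intro conjI allI)
      fix j
      have "(\<Sum>k<length a. if ?ixs ! k = j then a ! k else 0) = (\<Sum>k<length g. if k = j - 1 \<and> 1 \<le> j then g ! k else 0)"
        using ag by (intro sum.cong refl) (auto simp del: upt_Suc)
      also have "\<dots> = comp_exp g j" by (cases "1 \<le> j") (auto simp: comp_exp_def)
      finally show "comp_exp g j = (\<Sum>k<length a. if ?ixs ! k = j then a ! k else 0)" by simp
    qed (use ag in \<open>auto simp: sorted_wrt_iff_nth_less simp del: upt_Suc\<close>)
    thus "\<exists>ix. ?Q ix" by blast
  qed
  thus ?thesis by (simp add: Mcoef_def)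
qed

lemma const2_mult: "const2 a * const2 b = const2 (a * b)" by (simp add: const2_def)

lemma const2_add: "const2 a + const2 b = const2 (a + b)" by (simp add: const2_def)

lemma const2_of_int: "const2 (of_int k) = of_int k" by (simp add: const2_def of_int_poly)

lemma const2_of_nat: "const2 (of_nat k) = of_nat k" by (simp add: const2_def of_nat_poly)

lemma const2_0: "const2 0 = 0" by (simp add: const2_def)

lemma const2_1: "const2 1 = 1" by (simp add: const2_def one_pCons)

lemma const2_eq0: "(const2 a = 0) = (a = 0)" by (simp add: const2_def)

lemma const2_sum: "const2 (\<Sum>x\<in>A. f x) = (\<Sum>x\<in>A. const2 (f x))"
  by (induction A rule: infinite_finite_induct) (auto simp: const2_0 const2_add[symmetric])

lemma Psicoef_comp_exp:
  assumes a: "a \<in> comps n" and b: "b \<in> comps n"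
  shows "Psicoef n a (comp_exp b) = const2 (of_nat (zee a)) * (if comp_le a b then const2 (inverse (of_nat (pi_pair a b))) else 0)"
proof -
  have fin: "finite (comps n)" using bij_betw_finite[OF Sset_bij] by simp
  have "(\<Sum>\<beta>\<in>{\<beta>\<in>comps n. comp_le a \<beta>}. const2 (inverse (of_nat (pi_pair a \<beta>))) * of_nat (Mcoef \<beta> (comp_exp b)))
      = (\<Sum>\<beta>\<in>{\<beta>\<in>comps n. comp_le a \<beta>}. if \<beta> = b then const2 (inverse (of_nat (pi_pair a \<beta>))) else 0)"
    using Mcoef_comp_exp[OF comps_pos comps_pos[OF b]] by (intro sum.cong refl) auto
  also have "\<dots> = (if comp_le a b then const2 (inverse (of_nat (pi_pair a b))) else 0)"
    using fin b by (subst sum.delta) auto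
  finally show ?thesis by (simp add: Psicoef_def)
qed

lemma scaled_Psicoef_comp_exp:
  assumes a: "a \<in> comps n" and b: "b \<in> comps n"
  shows "x * const2 (inverse (of_nat (zee a))) * Psicoef n a (comp_exp b) = (if comp_le a b then x * const2 (inverse (of_nat (pi_pair a b))) else 0)"
proof -
  have z: "zee a \<noteq> 0" using zee_pos[OF comps_pos[OF a]] by simp
  have "const2 (inverse (of_nat (zee a))) * const2 (of_nat (zee a)) = 1"
    using z by (simp add: const2_mult const2_1)
  thus ?thesis unfolding Psicoef_comp_exp[OF a b] by (simp add: mult.assoc[symmetric])
qed

lemma unitriangular_zero:
  assumes h: "\<forall>b\<in>comps n. (\<Sum>a\<in>comps n. if comp_le a b then \<delta> a * const2 (inverse (of_nat (pi_pair a b))) else 0) = (0::rpoly2)"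
  shows "a \<in> comps n \<Longrightarrow> \<delta> a = 0"
proof -
  have fin: "finite (comps n)" using bij_betw_finite[OF Sset_bij] by simp
  have "\<forall>a\<in>comps n. n - length a = k \<longrightarrow> \<delta> a = 0" for k
  proof (induction k rule: less_induct)
    case (less k)
    show ?case
    proof (intro ballI impI)
      fix a assume a: "a \<in> comps n" and k: "n - length a = k"
      have others: "\<And>a'. a' \<in> comps n \<Longrightarrow> comp_le a' a \<Longrightarrow> a' \<noteq> a \<Longrightarrow> \<delta> a' = 0"
      proof -
        fix a' assume a': "a' \<in> comps n" "comp_le a' a" "a' \<noteq> a"
        have "length a < length a'" by (rule strict_finer_len[OF a'(1) a a'(2,3)])
        moreover have "length a' \<le> n" by (rule comps_len[OF a'(1)])
        ultimately have "n - length a' < k" using k by simp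
        thus "\<delta> a' = 0" using less.IH a'(1) by blast
      qed
      have "(\<Sum>a'\<in>comps n. if comp_le a' a then \<delta> a' * const2 (inverse (of_nat (pi_pair a' a))) else 0)
          = (\<Sum>a'\<in>comps n. if a' = a then \<delta> a' * const2 (inverse (of_nat (pi_pair a' a))) else 0)"
        using others by (intro sum.cong refl) (auto simp: comp_le_def)
      also have "\<dots> = \<delta> a * const2 (inverse (of_nat (pi_pair a a)))" using fin a by simp
      finally have "\<delta> a * const2 (inverse (of_nat (pi_pair a a))) = 0" using h a by simp
      moreover have "const2 (inverse (of_nat (pi_pair a a))) \<noteq> 0"
        using pi_pair_pos[OF comps_pos[OF a], of a] by (simp add: const2_eq0)
      ultimately show "\<delta> a = 0" by simp
    qed
  qed
  thus "a \<in> comps n \<Longrightarrow> \<delta> a = 0" by blast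
qed

lemma sum_supersets_sign:
  assumes f: "finite M" and W: "W \<subseteq> M"
  shows "(\<Sum>U\<in>{U\<in>Pow M. W \<subseteq> U}. (-1::int) ^ (card M - card U)) = (if W = M then 1 else 0)"
proof -
  have fW: "finite W" "finite (M - W)" using f W finite_subset by auto
  have b: "bij_betw (\<lambda>U'. W \<union> U') (Pow (M - W)) {U\<in>Pow M. W \<subseteq> U}"
    by (rule bij_betw_byWitness[where f' = "\<lambda>U. U - W"]) (use W in auto)
  have "(\<Sum>U\<in>{U\<in>Pow M. W \<subseteq> U}. (-1::int) ^ (card M - card U))
      = (\<Sum>U'\<in>Pow (M - W). (-1::int) ^ (card M - card (W \<union> U')))"
    by (rule sum.reindex_bij_betw[OF b, symmetric])
  also have "\<dots> = (\<Sum>U'\<in>Pow (M - W). (-1::int) ^ (card (M - W) - card U'))"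
  proof (rule sum.cong[OF refl])
    fix U' assume U': "U' \<in> Pow (M - W)"
    have "finite U'" using U' fW finite_subset by auto
    hence "card (W \<union> U') = card W + card U'" using U' fW by (subst card_Un_disjoint) auto
    moreover have "card M = card W + card (M - W)" using f W by (metis card_Diff_subset card_mono diff_add_inverse le_add_diff_inverse fW(1))
    moreover have "card U' \<le> card (M - W)" using U' fW by (intro card_mono) auto
    ultimately show "(-1::int) ^ (card M - card (W \<union> U')) = (-1) ^ (card (M - W) - card U')" by simp
  qed
  also have "\<dots> = (\<Prod>x\<in>M - W. (1::int) - 1)"
  proof -
    have e: "(\<Prod>x\<in>M - W. (1::int) - 1) = (\<Sum>U'\<in>Pow (M - W). (-1::int) ^ (card (M - W) - card U') * prod (\<lambda>_. 1) U' * prod (\<lambda>_. 1) (M - W - U'))"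
      by (rule prod_diff_conv_sum'[OF fW(2)])
    show ?thesis unfolding e by simp
  qed
  also have "\<dots> = (if W = M then 1 else 0)" using W fW by (auto simp: card_eq_0_iff)
  finally show ?thesis .
qed

lemma omega_set_subset_iff:
  assumes S: "S \<subseteq> {1..<n}" and T: "T \<subseteq> {1..<n}"
  shows "omega_set n S \<subseteq> T \<longleftrightarrow> S \<union> (\<lambda>s. n - s) ` T = {1..<n}"
proof -
  let ?f = "\<lambda>s. n - s" and ?M = "{1..<n}"
  have ff: "?f (?f x) = x" "?f x \<in> ?M" if "x \<in> ?M" for x using that by auto
  have mem: "y \<in> ?f ` A \<longleftrightarrow> ?f y \<in> A" if "y \<in> ?M" "A \<subseteq> ?M" for y A
  proof
    assume "y \<in> ?f ` A"
    then obtain a where "a \<in> A" "y = ?f a" by blast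
    thus "?f y \<in> A" using ff(1)[of a] that(2) by auto
  next
    assume "?f y \<in> A"
    thus "y \<in> ?f ` A" using ff(1)[OF that(1)] by (metis image_eqI)
  qed
  have "omega_set n S \<subseteq> T \<longleftrightarrow> (\<forall>x\<in>?M. ?f x \<notin> S \<longrightarrow> x \<in> T)"
    unfolding omega_set_def using mem[OF _ S] by blast
  also have "\<dots> \<longleftrightarrow> (\<forall>y\<in>?M. y \<notin> S \<longrightarrow> ?f y \<in> T)"
    using ff by metis
  also have "\<dots> \<longleftrightarrow> (\<forall>y\<in>?M. y \<notin> S \<longrightarrow> y \<in> ?f ` T)"
    using mem[OF _ T] by auto
  also have "\<dots> \<longleftrightarrow> S \<union> ?f ` T = ?M"
    using S T ff(2) by blast
  finally show ?thesis .
qed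

lemma length_eq_card_Sset:
  assumes "g \<in> comps n"
  shows "n - length g = card {1..<n} - card (Sset g)"
proof (cases "n = 0")
  case True thus ?thesis using comps_len[OF assms] by simp
next
  case False
  hence "g \<noteq> []" using comps_sum[OF assms] by auto
  thus ?thesis using card_Sset[OF comps_pos[OF assms]] comps_len[OF assms] by (cases g) auto
qed

lemma bij_betw_Sset_supersets:
  "bij_betw Sset {g\<in>comps n. V \<subseteq> Sset g} {U\<in>Pow {1..<n}. V \<subseteq> U}"
proof (rule bij_betw_subset[OF Sset_bij[of n]])
  show "Sset ` {g\<in>comps n. V \<subseteq> Sset g} = {U\<in>Pow {1..<n}. V \<subseteq> U}"
    using Compr_image_eq[of Sset "comps n" "\<lambda>U. V \<subseteq> U"] bij_betw_imp_surj_on[OF Sset_bij] by simp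
qed simp

lemma omega_indicator_alternating:
  assumes b: "b \<in> comps n" and S: "S \<subseteq> {1..<n}"
  shows "(if omega_set n S \<subseteq> Sset b then 1 else 0 :: int)
       = (\<Sum>g\<in>{g\<in>comps n. comp_le g (rev b)}. (-1) ^ (n - length g) * (if S \<subseteq> Sset g then 1 else 0))"
proof -
  let ?M = "{1..<n}" and ?V = "Sset (rev b)"
  have V: "?V = (\<lambda>s. n - s) ` Sset b" using Sset_rev comps_sum[OF b] by simp
  have "(\<Sum>g\<in>{g\<in>comps n. comp_le g (rev b)}. (-1::int) ^ (n - length g) * (if S \<subseteq> Sset g then 1 else 0))
      = (\<Sum>g\<in>{g\<in>comps n. ?V \<subseteq> Sset g}. (-1) ^ (card ?M - card (Sset g)) * (if S \<subseteq> Sset g then 1 else 0))"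
    using length_eq_card_Sset by (intro sum.cong) (auto simp: comp_le_def)
  also have "\<dots> = (\<Sum>U\<in>{U\<in>Pow ?M. ?V \<subseteq> U}. (-1) ^ (card ?M - card U) * (if S \<subseteq> U then 1 else 0))"
    by (rule sum.reindex_bij_betw[OF bij_betw_Sset_supersets])
  also have "\<dots> = (\<Sum>U\<in>{U\<in>{U\<in>Pow ?M. ?V \<subseteq> U}. S \<subseteq> U}. (-1) ^ (card ?M - card U))"
    by (subst sum.inter_filter) (auto intro: sum.cong)
  also have "\<dots> = (\<Sum>U\<in>{U\<in>Pow ?M. S \<union> ?V \<subseteq> U}. (-1) ^ (card ?M - card U))"
    by (rule sum.cong) auto
  also have "\<dots> = (if S \<union> ?V = ?M then 1 else 0)"
    using S V Sset_sub[OF b] by (intro sum_supersets_sign) (auto simp: subset_iff)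
  also have "(S \<union> ?V = ?M) \<longleftrightarrow> omega_set n S \<subseteq> Sset b"
    using omega_set_subset_iff[OF S Sset_sub[OF b]] V by simp
  finally show ?thesis by simp
qed

section \<open>Colourings and the expansion of \<open>B_G(x; y+1, z+1)\<close>\<close>

definition color_class :: "nat \<Rightarrow> (nat \<Rightarrow> nat) \<Rightarrow> nat \<Rightarrow> nat set" where
  "color_class n \<kappa> j = {i\<in>{1..n}. \<kappa> i = j}"

definition colorings :: "nat \<Rightarrow> nat list \<Rightarrow> (nat \<Rightarrow> nat) set" where
  "colorings n g = {\<kappa>\<in>{1..n} \<rightarrow>\<^sub>E {1..}. \<forall>j. card (color_class n \<kappa> j) = comp_exp g j}"

definition coloring_blocks :: "nat \<Rightarrow> nat \<Rightarrow> (nat \<Rightarrow> nat) \<Rightarrow> nat set list" where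
  "coloring_blocks n L \<kappa> = map (\<lambda>k. color_class n \<kappa> (L - k)) [0..<L]"

text \<open>The value \<open>undefined\<close> off \<open>[n]\<close> makes the colouring extensional, as \<open>\<rightarrow>\<^sub>E\<close> requires.\<close>

definition block_coloring :: "nat \<Rightarrow> nat set list \<Rightarrow> nat \<Rightarrow> nat" where
  "block_coloring n xs = (\<lambda>i. if i \<in> {1..n} then length xs - block_index xs i else undefined)"

lemma colorings_range:
  assumes k: "\<kappa> \<in> colorings n g" and i: "i \<in> {1..n}"
  shows "1 \<le> \<kappa> i \<and> \<kappa> i \<le> length g"
proof -
  have "i \<in> color_class n \<kappa> (\<kappa> i)" using i by (simp add: color_class_def)
  moreover have "finite (color_class n \<kappa> (\<kappa> i))" by (simp add: color_class_def)
  ultimately have "card (color_class n \<kappa> (\<kappa> i)) \<noteq> 0" by auto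
  hence "comp_exp g (\<kappa> i) \<noteq> 0" using k by (simp add: colorings_def)
  thus ?thesis by (simp add: comp_exp_def split: if_splits)
qed

lemma finite_colorings: "finite (colorings n g)"
proof -
  have "colorings n g \<subseteq> {1..n} \<rightarrow>\<^sub>E {1..length g}"
    using colorings_range by (auto simp: colorings_def PiE_def Pi_def)
  thus ?thesis by (rule finite_subset) (simp add: finite_PiE)
qed

lemma coloring_blocks_in:
  assumes g: "g \<in> comps n" and k: "\<kappa> \<in> colorings n g"
  shows "coloring_blocks n (length g) \<kappa> \<in> typed_partitions n g"
proof -
  let ?L = "length g"
  let ?xs = "coloring_blocks n ?L \<kappa>"
  have len: "length ?xs = ?L" by (simp add: coloring_blocks_def)
  have nth: "\<And>k. k < ?L \<Longrightarrow> ?xs ! k = color_class n \<kappa> (?L - k)" by (simp add: coloring_blocks_def)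
  have cardk: "\<And>k. k < ?L \<Longrightarrow> card (?xs ! k) = g ! (?L - Suc k)"
    using k nth by (auto simp: colorings_def comp_exp_def)
  have mc: "map card ?xs = rev g"
    by (rule nth_equalityI) (auto simp: len cardk rev_nth)
  have pos: "\<forall>x\<in>set g. 0 < x" using g by (simp add: comps_def)
  have ne: "{} \<notin> set ?xs"
  proof
    assume "{} \<in> set ?xs"
    then obtain k where "k < ?L" "?xs ! k = {}" using len by (auto simp: in_set_conv_nth)
    hence "g ! (?L - Suc k) = 0" using cardk by fastforce
    moreover have "?L - Suc k < ?L" using \<open>k < ?L\<close> by simp
    ultimately show False using pos nth_mem[of "?L - Suc k" g] by auto
  qed
  have d: "disjoint_blocks ?xs"
  proof (rule disjoint_blocksI)
    fix k k' assume "k < length ?xs" "k' < length ?xs" "k \<noteq> k'"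
    thus "?xs ! k \<inter> ?xs ! k' = {}" using len nth by (auto simp: color_class_def)
  qed
  have u: "\<Union>(set ?xs) = {1..n}"
  proof
    show "\<Union>(set ?xs) \<subseteq> {1..n}" by (auto simp: coloring_blocks_def color_class_def)
    show "{1..n} \<subseteq> \<Union>(set ?xs)"
    proof
      fix i assume i: "i \<in> {1..n}"
      have r: "1 \<le> \<kappa> i" "\<kappa> i \<le> ?L" using colorings_range[OF k i] by auto
      hence "?L - \<kappa> i < ?L" by simp
      moreover have "i \<in> ?xs ! (?L - \<kappa> i)" using nth[OF \<open>?L - \<kappa> i < ?L\<close>] r i by (simp add: color_class_def)
      ultimately show "i \<in> \<Union>(set ?xs)" using len by (metis UnionI nth_mem)
    qed
  qed
  show ?thesis using mc ne d u by (simp add: typed_partitions_def ord_partitions_def)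
qed

lemma color_class_block_coloring:
  assumes xs: "xs \<in> typed_partitions n g"
  shows "color_class n (block_coloring n xs) j = (if 1 \<le> j \<and> j \<le> length g then xs ! (length g - j) else {})"
proof -
  let ?L = "length g"
  have o: "xs \<in> ord_partitions {1..n}" and len: "length xs = ?L"
    using xs length_typed_partition[OF xs] by (auto simp: typed_partitions_def)
  have sub: "xs ! k \<subseteq> {1..n}" if "k < ?L" for k
    using that len o nth_mem[of k xs] by (auto simp: ord_partitions_def)
  have "i \<in> color_class n (block_coloring n xs) j \<longleftrightarrow> 1 \<le> j \<and> j \<le> ?L \<and> i \<in> xs ! (?L - j)" for i
  proof (cases "i \<in> {1..n}")
    case True
    have idx: "block_index xs i < ?L" "i \<in> xs ! block_index xs i" using block_index_mem[OF o True] len by auto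
    have "i \<in> xs ! (?L - j) \<longleftrightarrow> block_index xs i = ?L - j" if "1 \<le> j" "j \<le> ?L"
      using block_index_eq[OF o, of "?L - j" i] idx that len by auto
    thus ?thesis using True idx len by (auto simp: color_class_def block_coloring_def)
  next
    case False
    have "i \<notin> xs ! (?L - j)" if "1 \<le> j" "j \<le> ?L" 
    proof
      assume "i \<in> xs ! (?L - j)"
      moreover have "?L - j < ?L" using that by simp
      ultimately show False using sub False by blast
    qed
    thus ?thesis using False by (auto simp: color_class_def)
  qed
  thus ?thesis by auto
qed

lemma block_coloring_in:
  assumes g: "g \<in> comps n" and xs: "xs \<in> typed_partitions n g"
  shows "block_coloring n xs \<in> colorings n g"
proof -
  let ?L = "length g"
  have o: "xs \<in> ord_partitions {1..n}" and len: "length xs = ?L" using xs length_typed_partition[OF xs] by (auto simp: typed_partitions_def)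
  have mc: "map card xs = rev g" using xs by (simp add: typed_partitions_def)
  have pi: "block_coloring n xs \<in> {1..n} \<rightarrow>\<^sub>E {1..}"
  proof
    fix i assume "i \<in> {1..n}"
    thus "block_coloring n xs i \<in> {1..}" using block_index_mem[OF o, of i] len by (simp add: block_coloring_def Suc_le_eq)
  qed (auto simp: block_coloring_def)
  have "\<And>j. card (color_class n (block_coloring n xs) j) = comp_exp g j"
  proof -
    fix j
    show "card (color_class n (block_coloring n xs) j) = comp_exp g j"
    proof (cases "1 \<le> j \<and> j \<le> ?L")
      case True
      have "?L - j < length xs" using len True by arith
      hence "card (xs ! (?L - j)) = (map card xs) ! (?L - j)" by simp
      also have "\<dots> = g ! (j - 1)"
      proof -
        have lt: "?L - j < ?L" using True by arith
        have "rev g ! (?L - j) = g ! (?L - Suc (?L - j))" using lt by (simp add: rev_nth)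
        moreover have "?L - Suc (?L - j) = j - 1" using True by arith
        ultimately show ?thesis using mc by simp
      qed
      finally show ?thesis using True color_class_block_coloring[OF xs, of j] by (simp add: comp_exp_def)
    next
      case False
      hence "color_class n (block_coloring n xs) j = {}" using color_class_block_coloring[OF xs, of j] by (simp only: if_not_P[OF False] if_False)
      moreover have "comp_exp g j = 0" unfolding comp_exp_def by (simp only: if_not_P[OF False] if_False)
      ultimately show ?thesis by simp
    qed
  qed
  thus ?thesis using pi by (simp add: colorings_def)
qed

lemma coloring_blocks_block_coloring: "g \<in> comps n \<Longrightarrow> xs \<in> typed_partitions n g \<Longrightarrow> coloring_blocks n (length g) (block_coloring n xs) = xs"
proof -
  assume g: "g \<in> comps n" and xs: "xs \<in> typed_partitions n g"
  have len: "length xs = length g" using length_typed_partition[OF xs] .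
  show ?thesis
  proof (rule nth_equalityI)
    show "length (coloring_blocks n (length g) (block_coloring n xs)) = length xs" using len by (simp add: coloring_blocks_def)
    fix k assume "k < length (coloring_blocks n (length g) (block_coloring n xs))"
    hence k: "k < length g" by (simp add: coloring_blocks_def)
    thus "coloring_blocks n (length g) (block_coloring n xs) ! k = xs ! k" using color_class_block_coloring[OF xs, of "length g - k"] by (simp add: coloring_blocks_def Suc_le_eq)
  qed
qed

lemma block_coloring_coloring_blocks: "g \<in> comps n \<Longrightarrow> \<kappa> \<in> colorings n g \<Longrightarrow> block_coloring n (coloring_blocks n (length g) \<kappa>) = \<kappa>"
proof
  fix i assume g: "g \<in> comps n" and k: "\<kappa> \<in> colorings n g"
  let ?L = "length g" and ?xs = "coloring_blocks n (length g) \<kappa>"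
  have o: "?xs \<in> ord_partitions {1..n}" using coloring_blocks_in[OF g k] by (simp add: typed_partitions_def)
  show "block_coloring n ?xs i = \<kappa> i"
  proof (cases "i \<in> {1..n}")
    case True
    have r: "1 \<le> \<kappa> i" "\<kappa> i \<le> ?L" using colorings_range[OF k True] by auto
    have "i \<in> ?xs ! (?L - \<kappa> i)" using r True by (simp add: coloring_blocks_def color_class_def)
    hence "block_index ?xs i = ?L - \<kappa> i" using block_index_eq[OF o] r by (simp add: coloring_blocks_def)
    thus ?thesis using True r by (simp add: block_coloring_def coloring_blocks_def)
  next
    case False
    thus ?thesis using k by (auto simp: block_coloring_def colorings_def PiE_def extensional_def)
  qed
qed

lemma strict_coloring_iff_arcs_backward:
  assumes g: "g \<in> comps n" and k: "\<kappa> \<in> colorings n g" and R: "R \<subseteq> {1..n} \<times> {1..n}"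
  shows "(\<forall>(u, v)\<in>R. \<kappa> u < \<kappa> v) = arcs_backward R (coloring_blocks n (length g) \<kappa>)"
proof -
  let ?L = "length g" and ?xs = "coloring_blocks n (length g) \<kappa>"
  have nth: "\<And>k. k < ?L \<Longrightarrow> ?xs ! k = color_class n \<kappa> (?L - k)" by (simp add: coloring_blocks_def)
  have len: "length ?xs = ?L" by (simp add: coloring_blocks_def)
  show ?thesis
  proof
    assume s: "\<forall>(u, v)\<in>R. \<kappa> u < \<kappa> v"
    show "arcs_backward R ?xs" unfolding arcs_backward_iff_nth
    proof (intro allI impI ballI)
      fix kk kk' u v assume h: "kk < length ?xs" "kk' < length ?xs" "u \<in> ?xs ! kk" "v \<in> ?xs ! kk'" "(u, v) \<in> R"
      have "\<kappa> u = ?L - kk" "\<kappa> v = ?L - kk'" using h nth len by (auto simp: color_class_def)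
      moreover have "\<kappa> u < \<kappa> v" using s h(5) by auto
      ultimately show "kk' < kk" using h len by simp
    qed
  next
    assume b: "arcs_backward R ?xs"
    show "\<forall>(u, v)\<in>R. \<kappa> u < \<kappa> v"
    proof (intro ballI, clarify)
      fix u v assume uv: "(u, v) \<in> R"
      have u: "u \<in> {1..n}" and v: "v \<in> {1..n}" using uv R by auto
      have ru: "1 \<le> \<kappa> u" "\<kappa> u \<le> ?L" using colorings_range[OF k u] by auto
      have rv: "1 \<le> \<kappa> v" "\<kappa> v \<le> ?L" using colorings_range[OF k v] by auto
      have "u \<in> ?xs ! (?L - \<kappa> u)" "v \<in> ?xs ! (?L - \<kappa> v)" using nth ru rv u v by (auto simp: color_class_def)
      hence "?L - \<kappa> v < ?L - \<kappa> u" using b[unfolded arcs_backward_iff_nth, rule_format, of "?L - \<kappa> u" "?L - \<kappa> v" u v] uv ru rv len by simp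
      thus "\<kappa> u < \<kappa> v" using ru rv by simp
    qed
  qed
qed

lemma card_strict_colorings:
  assumes g: "g \<in> comps n" and R: "R \<subseteq> {1..n} \<times> {1..n}"
  shows "card {\<kappa>\<in>colorings n g. \<forall>(u, v)\<in>R. \<kappa> u < \<kappa> v} = card {xs\<in>typed_partitions n g. arcs_backward R xs}"
proof -
  let ?F = "coloring_blocks n (length g)"
  have inj: "inj_on ?F (colorings n g)" by (rule inj_on_inverseI[where g = "block_coloring n"]) (rule block_coloring_coloring_blocks[OF g])
  have img: "?F ` {\<kappa>\<in>colorings n g. \<forall>(u, v)\<in>R. \<kappa> u < \<kappa> v} = {xs\<in>typed_partitions n g. arcs_backward R xs}"
  proof
    show "?F ` {\<kappa>\<in>colorings n g. \<forall>(u, v)\<in>R. \<kappa> u < \<kappa> v} \<subseteq> {xs\<in>typed_partitions n g. arcs_backward R xs}"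
    proof
      fix xs assume "xs \<in> ?F ` {\<kappa>\<in>colorings n g. \<forall>(u, v)\<in>R. \<kappa> u < \<kappa> v}"
      then obtain \<kappa> where k: "\<kappa> \<in> colorings n g" "\<forall>(u, v)\<in>R. \<kappa> u < \<kappa> v" "xs = ?F \<kappa>" by blast
      have "xs \<in> typed_partitions n g" using coloring_blocks_in[OF g k(1)] k(3) by simp
      moreover have "arcs_backward R xs" using strict_coloring_iff_arcs_backward[OF g k(1) R] k(2,3) by simp
      ultimately show "xs \<in> {xs\<in>typed_partitions n g. arcs_backward R xs}" by simp
    qed
    show "{xs\<in>typed_partitions n g. arcs_backward R xs} \<subseteq> ?F ` {\<kappa>\<in>colorings n g. \<forall>(u, v)\<in>R. \<kappa> u < \<kappa> v}"
    proof
      fix xs assume xs: "xs \<in> {xs\<in>typed_partitions n g. arcs_backward R xs}"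
      have G: "block_coloring n xs \<in> colorings n g" using block_coloring_in[OF g] xs by simp
      have "?F (block_coloring n xs) = xs" using coloring_blocks_block_coloring[OF g] xs by simp
      moreover have "\<forall>(u, v)\<in>R. block_coloring n xs u < block_coloring n xs v" using strict_coloring_iff_arcs_backward[OF g G R] xs \<open>?F (block_coloring n xs) = xs\<close> by simp
      ultimately show "xs \<in> ?F ` {\<kappa>\<in>colorings n g. \<forall>(u, v)\<in>R. \<kappa> u < \<kappa> v}" using G
        by (intro image_eqI[of xs ?F "block_coloring n xs"]) auto
    qed
  qed
  have inj_strict: "inj_on ?F {\<kappa>\<in>colorings n g. \<forall>(u, v)\<in>R. \<kappa> u < \<kappa> v}" using inj by (rule inj_on_subset) auto
  have "card (?F ` {\<kappa>\<in>colorings n g. \<forall>(u, v)\<in>R. \<kappa> u < \<kappa> v}) = card {\<kappa>\<in>colorings n g. \<forall>(u, v)\<in>R. \<kappa> u < \<kappa> v}"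
    by (rule card_image[OF inj_strict])
  thus ?thesis unfolding img by simp
qed

text \<open>Expanding \<open>(y+1)^asc (z+1)^inv\<close> edge by edge, each edge is dropped, kept as an arc
  counted by \<open>y\<close>, or reversed and counted by \<open>z\<close>. A choice records the resulting arcs and the
  exponents of \<open>y\<close> and \<open>z\<close>.\<close>

fun arc_choices :: "(nat \<times> nat) list \<Rightarrow> ((nat \<times> nat) list \<times> nat \<times> nat) list" where
  "arc_choices [] = [([], 0, 0)]"
| "arc_choices (e # es) = concat (map (\<lambda>(R, a, b). [(R, a, b), (e # R, Suc a, b), ((snd e, fst e) # R, a, Suc b)]) (arc_choices es))"

definition choice_weight :: "(nat \<Rightarrow> nat) \<Rightarrow> (nat \<times> nat) list \<times> nat \<times> nat \<Rightarrow> rpoly2" where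
  "choice_weight \<kappa> c = (case c of (R, a, b) \<Rightarrow> if (\<forall>(u, v)\<in>set R. \<kappa> u < \<kappa> v) then yvar ^ a * zvar ^ b else 0)"

lemma arc_choices_subset: "set es \<subseteq> A \<times> A \<Longrightarrow> c \<in> set (arc_choices es) \<Longrightarrow> set (fst c) \<subseteq> A \<times> A"
proof (induction es arbitrary: c)
  case Nil thus ?case by simp
next
  case (Cons e es)
  then obtain c' where c': "c' \<in> set (arc_choices es)" and "c \<in> set ((\<lambda>(R, a, b). [(R, a, b), (e # R, Suc a, b), ((snd e, fst e) # R, a, Suc b)]) c')"
    by auto
  moreover obtain R a b where "c' = (R, a, b)" by (cases c')
  moreover have "set R \<subseteq> A \<times> A" using Cons.IH[OF _ c'] Cons.prems(1) \<open>c' = (R, a, b)\<close> by auto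
  moreover have "fst e \<in> A" "snd e \<in> A" using Cons.prems(1) by auto
  ultimately show ?case by auto
qed

lemma sum_list_concat: "sum_list (concat xss) = sum_list (map sum_list xss)"
  by (induction xss) auto

lemma asc_add: "asc (add_mset e E) \<kappa> = asc E \<kappa> + (if \<kappa> (fst e) < \<kappa> (snd e) then 1 else 0)"
  by (cases e) (simp add: asc_def)

lemma inv_add: "inv (add_mset e E) \<kappa> = inv E \<kappa> + (if \<kappa> (snd e) < \<kappa> (fst e) then 1 else 0)"
  by (cases e) (simp add: inv_def)

lemma shifted_weight_eq_choice_sum:
  "(yvar + 1) ^ asc (mset es) \<kappa> * (zvar + 1) ^ inv (mset es) \<kappa> = sum_list (map (choice_weight \<kappa>) (arc_choices es))"
proof (induction es)
  case Nil thus ?case by (simp add: asc_def inv_def choice_weight_def)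
next
  case (Cons e es)
  obtain i j where e: "e = (i, j)" by (cases e)
  let ?f = "\<lambda>c. choice_weight \<kappa> c * (1 + (if \<kappa> i < \<kappa> j then yvar else 0) + (if \<kappa> j < \<kappa> i then zvar else 0))"
  have "sum_list (map (choice_weight \<kappa>) (arc_choices (e # es))) = sum_list (map ?f (arc_choices es))"
  proof -
    have "sum_list (map (choice_weight \<kappa>) (arc_choices (e # es)))
        = sum_list (map (\<lambda>(R, a, b). choice_weight \<kappa> (R, a, b) + choice_weight \<kappa> (e # R, Suc a, b) + choice_weight \<kappa> ((j, i) # R, a, Suc b)) (arc_choices es))"
      by (simp add: sum_list_concat map_concat o_def case_prod_unfold add.assoc e)
    also have "\<dots> = sum_list (map ?f (arc_choices es))"
    proof (intro arg_cong[where f = sum_list] map_cong refl)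
      fix c assume "c \<in> set (arc_choices es)"
      obtain R a b where c: "c = (R, a, b)" by (cases c)
      show "(case c of (R, a, b) \<Rightarrow> choice_weight \<kappa> (R, a, b) + choice_weight \<kappa> (e # R, Suc a, b) + choice_weight \<kappa> ((j, i) # R, a, Suc b)) = ?f c"
        unfolding c e by (auto simp: choice_weight_def algebra_simps)
    qed
    finally show ?thesis .
  qed
  also have "\<dots> = sum_list (map (choice_weight \<kappa>) (arc_choices es)) * (1 + (if \<kappa> i < \<kappa> j then yvar else 0) + (if \<kappa> j < \<kappa> i then zvar else 0))"
    by (simp add: sum_list_mult_const)
  also have "\<dots> = (yvar + 1) ^ asc (mset (e # es)) \<kappa> * (zvar + 1) ^ inv (mset (e # es)) \<kappa>"
    using Cons by (auto simp: asc_add inv_add e algebra_simps)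
  finally show ?case by simp
qed

lemma sum_list_sum_swap:
  "(\<Sum>x\<in>A. sum_list (map (f x) L)) = sum_list (map (\<lambda>c. \<Sum>x\<in>A. f x c) L)"
  by (induction L) (auto simp: sum.distrib)

lemma Bcoef_comp_exp:
  assumes g: "g \<in> comps n" and es: "set es \<subseteq> {1..n} \<times> {1..n}"
  shows "Bcoef n (mset es) (yvar + 1) (zvar + 1) (comp_exp g)
       = sum_list (map (\<lambda>c. yvar ^ fst (snd c) * zvar ^ snd (snd c) * of_nat (card {xs\<in>typed_partitions n g. arcs_backward (set (fst c)) xs})) (arc_choices es))"
proof -
  have "Bcoef n (mset es) (yvar + 1) (zvar + 1) (comp_exp g) = (\<Sum>\<kappa>\<in>colorings n g. (yvar + 1) ^ asc (mset es) \<kappa> * (zvar + 1) ^ inv (mset es) \<kappa>)"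
    by (simp add: Bcoef_def colorings_def color_class_def)
  also have "\<dots> = (\<Sum>\<kappa>\<in>colorings n g. sum_list (map (choice_weight \<kappa>) (arc_choices es)))" by (simp add: shifted_weight_eq_choice_sum)
  also have "\<dots> = sum_list (map (\<lambda>c. \<Sum>\<kappa>\<in>colorings n g. choice_weight \<kappa> c) (arc_choices es))" by (rule sum_list_sum_swap)
  also have "\<dots> = sum_list (map (\<lambda>c. yvar ^ fst (snd c) * zvar ^ snd (snd c) * of_nat (card {xs\<in>typed_partitions n g. arcs_backward (set (fst c)) xs})) (arc_choices es))"
  proof (intro arg_cong[where f = sum_list] map_cong refl)
    fix c assume c: "c \<in> set (arc_choices es)"
    obtain R a b where cR: "c = (R, a, b)" by (cases c)
    have R: "set R \<subseteq> {1..n} \<times> {1..n}" using arc_choices_subset[OF es c] cR by simp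
    have "(\<Sum>\<kappa>\<in>colorings n g. choice_weight \<kappa> c) = (\<Sum>\<kappa>\<in>colorings n g. if (\<forall>(u, v)\<in>set R. \<kappa> u < \<kappa> v) then yvar ^ a * zvar ^ b else 0)"
      by (simp add: choice_weight_def cR)
    also have "\<dots> = (\<Sum>\<kappa>\<in>{\<kappa>\<in>colorings n g. \<forall>(u, v)\<in>set R. \<kappa> u < \<kappa> v}. yvar ^ a * zvar ^ b)"
      by (rule sum.inter_filter[symmetric, OF finite_colorings])
    also have "\<dots> = of_nat (card {\<kappa>\<in>colorings n g. \<forall>(u, v)\<in>set R. \<kappa> u < \<kappa> v}) * (yvar ^ a * zvar ^ b)"
      by simp
    also have "card {\<kappa>\<in>colorings n g. \<forall>(u, v)\<in>set R. \<kappa> u < \<kappa> v} = card {xs\<in>typed_partitions n g. arcs_backward (set R) xs}"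
      by (rule card_strict_colorings[OF g R])
    finally show "(\<Sum>\<kappa>\<in>colorings n g. choice_weight \<kappa> c) = yvar ^ fst (snd c) * zvar ^ snd (snd c) * of_nat (card {xs\<in>typed_partitions n g. arcs_backward (set (fst c)) xs})"
      by (simp add: cR mult.commute)
  qed
  finally show ?thesis .
qed

section \<open>Nonnegativity of the \<open>\<Psi>\<close>-coefficients\<close>

lemma yvar_pow: "(yvar::rpoly2) ^ a = monom 1 a" by (simp add: yvar_def monom_power)

lemma zvar_pow: "(zvar::rpoly2) ^ b = [:monom 1 b:]" unfolding zvar_def by (induction b) (auto simp: monom_power mult_monom)

lemma yz_monom: "(yvar::rpoly2) ^ a * zvar ^ b * of_nat m = monom (monom (of_nat m) b) a"
  unfolding yvar_pow zvar_pow by (simp add: of_nat_poly monom_0 mult_monom smult_monom)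

lemma in_Nyz_0: "in_Nyz 0" by (simp add: in_Nyz_def)

lemma in_Nyz_add: "in_Nyz p \<Longrightarrow> in_Nyz q \<Longrightarrow> in_Nyz (p + q)" by (simp add: in_Nyz_def)

lemma in_Nyz_monom: "in_Nyz ((yvar::rpoly2) ^ a * zvar ^ b * of_nat m)"
  unfolding yz_monom in_Nyz_def by (simp add: coeff_monom)

lemma in_Nyz_sum_list: "(\<And>x. x \<in> set xs \<Longrightarrow> in_Nyz (f x)) \<Longrightarrow> in_Nyz (sum_list (map f xs))"
  by (induction xs) (auto simp: in_Nyz_0 in_Nyz_add)

definition rooted_coeff :: "(nat \<times> nat) list \<Rightarrow> nat \<Rightarrow> nat list \<Rightarrow> rpoly2" where
  "rooted_coeff es n \<alpha> = sum_list (map (\<lambda>c. if acyclic (set (fst c))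
     then yvar ^ fst (snd c) * zvar ^ snd (snd c) * of_nat (rooted_count (set (fst c)) n \<alpha>) else 0)
     (arc_choices es))"

lemma in_Nyz_rooted_coeff: "in_Nyz (rooted_coeff es n \<alpha>)"
  unfolding rooted_coeff_def by (rule in_Nyz_sum_list) (auto simp: in_Nyz_monom in_Nyz_0)

lemma of_int_backward_sum_by_type:
  assumes \<beta>: "\<beta> \<in> comps n" and R: "R \<subseteq> {1..n} \<times> {1..n}"
  shows "(of_int (backward_sum R {1..n} \<beta>) :: rpoly2) = (\<Sum>\<alpha>\<in>comps n. if comp_le \<alpha> \<beta> \<and> acyclic R
           then of_nat (rooted_count R n \<alpha>) * const2 (inverse (of_nat (pi_pair \<alpha> \<beta>))) else 0)"
proof (cases "acyclic R")
  case True
  have "(of_int (backward_sum R {1..n} \<beta>) :: rpoly2) = const2 (of_int (backward_sum R {1..n} \<beta>))"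
    by (simp add: const2_of_int)
  also have "\<dots> = const2 (rooted_sum R {1..n} \<beta>)"
    using backward_sum_eq_rooted_sum[OF _ True comps_pos[OF \<beta>]] by simp
  also have "\<dots> = (\<Sum>\<alpha>\<in>comps n. if comp_le \<alpha> \<beta> \<and> acyclic R
           then of_nat (rooted_count R n \<alpha>) * const2 (inverse (of_nat (pi_pair \<alpha> \<beta>))) else 0)"
    unfolding rooted_sum_by_type[OF \<beta>] const2_sum using True
    by (intro sum.cong refl) (simp add: const2_0 const2_mult[symmetric] const2_of_nat)
  finally show ?thesis .
next
  case False
  thus ?thesis using backward_sum_cyclic[OF R False] by simp
qed

lemma signed_Bcoef_sum_backward:
  assumes \<beta>: "\<beta> \<in> comps n" and es: "set es \<subseteq> {1..n} \<times> {1..n}"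
  shows "(\<Sum>\<gamma>\<in>{\<gamma>\<in>comps n. comp_le \<gamma> (rev \<beta>)}.
            of_int ((-1) ^ (n - length \<gamma>)) * Bcoef n (mset es) (yvar + 1) (zvar + 1) (comp_exp \<gamma>))
       = sum_list (map (\<lambda>c. yvar ^ fst (snd c) * zvar ^ snd (snd c)
            * of_int (backward_sum (set (fst c)) {1..n} \<beta>)) (arc_choices es))"
proof -
  let ?G = "{\<gamma>\<in>comps n. comp_le \<gamma> (rev \<beta>)}"
  let ?m = "\<lambda>c. yvar ^ fst (snd c) * zvar ^ snd (snd c) :: rpoly2"
  let ?N = "\<lambda>c \<gamma>. card {xs\<in>typed_partitions n \<gamma>. arcs_backward (set (fst c)) xs}"
  have "(\<Sum>\<gamma>\<in>?G. of_int ((-1) ^ (n - length \<gamma>)) * Bcoef n (mset es) (yvar + 1) (zvar + 1) (comp_exp \<gamma>))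
      = (\<Sum>\<gamma>\<in>?G. of_int ((-1) ^ (n - length \<gamma>)) * sum_list (map (\<lambda>c. ?m c * of_nat (?N c \<gamma>)) (arc_choices es)))"
    using Bcoef_comp_exp[OF _ es] by (intro sum.cong refl) auto
  also have "\<dots> = sum_list (map (\<lambda>c. \<Sum>\<gamma>\<in>?G. of_int ((-1) ^ (n - length \<gamma>)) * (?m c * of_nat (?N c \<gamma>)))
      (arc_choices es))"
    by (simp add: sum_list_const_mult[symmetric] sum_list_sum_swap)
  also have "\<dots> = sum_list (map (\<lambda>c. ?m c * of_int (\<Sum>\<gamma>\<in>?G. (-1) ^ (n - length \<gamma>) * int (?N c \<gamma>)))
      (arc_choices es))"
    by (simp add: sum_distrib_left algebra_simps)
  also have "\<dots> = sum_list (map (\<lambda>c. ?m c * of_int (backward_sum (set (fst c)) {1..n} \<beta>)) (arc_choices es))"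
    unfolding backward_sum_by_type[OF \<beta>] ..
  finally show ?thesis .
qed

lemma signed_Bcoef_sum:
  assumes \<beta>: "\<beta> \<in> comps n" and es: "set es \<subseteq> {1..n} \<times> {1..n}"
  shows "(\<Sum>\<gamma>\<in>{\<gamma>\<in>comps n. comp_le \<gamma> (rev \<beta>)}.
            of_int ((-1) ^ (n - length \<gamma>)) * Bcoef n (mset es) (yvar + 1) (zvar + 1) (comp_exp \<gamma>))
       = (\<Sum>\<alpha>\<in>comps n. if comp_le \<alpha> \<beta> then rooted_coeff es n \<alpha> * const2 (inverse (of_nat (pi_pair \<alpha> \<beta>))) else 0)"
proof -
  let ?m = "\<lambda>c. yvar ^ fst (snd c) * zvar ^ snd (snd c) :: rpoly2"
  let ?P = "\<lambda>\<alpha>. const2 (inverse (of_nat (pi_pair \<alpha> \<beta>)))"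
  have "(\<Sum>\<gamma>\<in>{\<gamma>\<in>comps n. comp_le \<gamma> (rev \<beta>)}.
            of_int ((-1) ^ (n - length \<gamma>)) * Bcoef n (mset es) (yvar + 1) (zvar + 1) (comp_exp \<gamma>))
      = sum_list (map (\<lambda>c. ?m c * of_int (backward_sum (set (fst c)) {1..n} \<beta>)) (arc_choices es))"
    by (rule signed_Bcoef_sum_backward[OF \<beta> es])
  also have "\<dots> = sum_list (map (\<lambda>c. \<Sum>\<alpha>\<in>comps n. if comp_le \<alpha> \<beta> then (if acyclic (set (fst c))
          then ?m c * of_nat (rooted_count (set (fst c)) n \<alpha>) else 0) * ?P \<alpha> else 0) (arc_choices es))"
  proof (intro arg_cong[where f = sum_list] map_cong refl)
    fix c assume "c \<in> set (arc_choices es)"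
    hence "set (fst c) \<subseteq> {1..n} \<times> {1..n}" by (rule arc_choices_subset[OF es])
    note by_type = of_int_backward_sum_by_type[OF \<beta> this]
    show "?m c * of_int (backward_sum (set (fst c)) {1..n} \<beta>) = (\<Sum>\<alpha>\<in>comps n. if comp_le \<alpha> \<beta>
        then (if acyclic (set (fst c)) then ?m c * of_nat (rooted_count (set (fst c)) n \<alpha>) else 0) * ?P \<alpha> else 0)"
      unfolding by_type sum_distrib_left
      by (intro sum.cong refl) (simp add: mult.assoc)
  qed
  also have "\<dots> = (\<Sum>\<alpha>\<in>comps n. sum_list (map (\<lambda>c. if comp_le \<alpha> \<beta> then (if acyclic (set (fst c))
          then ?m c * of_nat (rooted_count (set (fst c)) n \<alpha>) else 0) * ?P \<alpha> else 0) (arc_choices es)))"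
    by (rule sum_list_sum_swap[symmetric])
  also have "\<dots> = (\<Sum>\<alpha>\<in>comps n. if comp_le \<alpha> \<beta> then rooted_coeff es n \<alpha> * ?P \<alpha> else 0)"
    by (intro sum.cong refl) (auto simp: rooted_coeff_def sum_list_mult_const)
  finally show ?thesis .
qed

lemma omega_Fcoef_expansion:
  fixes d :: "nat set \<Rightarrow> 'a::comm_ring_1"
  assumes \<beta>: "\<beta> \<in> comps n"
  shows "(\<Sum>S\<in>Pow {1..<n}. d S * of_nat (Fcoef n (omega_set n S) (comp_exp \<beta>)))
       = (\<Sum>\<gamma>\<in>{\<gamma>\<in>comps n. comp_le \<gamma> (rev \<beta>)}.
            of_int ((-1) ^ (n - length \<gamma>)) * (\<Sum>S\<in>Pow {1..<n}. d S * of_nat (Fcoef n S (comp_exp \<gamma>))))"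
proof -
  let ?G = "{\<gamma>\<in>comps n. comp_le \<gamma> (rev \<beta>)}"
  have "of_nat (Fcoef n (omega_set n S) (comp_exp \<beta>))
      = (\<Sum>\<gamma>\<in>?G. of_int ((-1) ^ (n - length \<gamma>)) * of_nat (Fcoef n S (comp_exp \<gamma>)) :: 'a)"
    if S: "S \<subseteq> {1..<n}" for S
  proof -
    have "omega_set n S \<subseteq> {1..<n}" by (auto simp: omega_set_def)
    hence "of_nat (Fcoef n (omega_set n S) (comp_exp \<beta>)) = (of_int (if omega_set n S \<subseteq> Sset \<beta> then 1 else 0) :: 'a)"
      using Fcoef_comp_exp[OF \<beta>] by simp
    also have "\<dots> = of_int (\<Sum>\<gamma>\<in>?G. (-1) ^ (n - length \<gamma>) * (if S \<subseteq> Sset \<gamma> then 1 else 0))"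
      using omega_indicator_alternating[OF \<beta> S] by simp
    also have "\<dots> = (\<Sum>\<gamma>\<in>?G. of_int ((-1) ^ (n - length \<gamma>)) * of_nat (Fcoef n S (comp_exp \<gamma>)))"
      unfolding of_int_sum using Fcoef_comp_exp S by (intro sum.cong refl) auto
    finally show ?thesis .
  qed
  hence "(\<Sum>S\<in>Pow {1..<n}. d S * of_nat (Fcoef n (omega_set n S) (comp_exp \<beta>)))
      = (\<Sum>S\<in>Pow {1..<n}. \<Sum>\<gamma>\<in>?G. of_int ((-1) ^ (n - length \<gamma>)) * (d S * of_nat (Fcoef n S (comp_exp \<gamma>))))"
    by (intro sum.cong refl) (simp add: sum_distrib_left mult.left_commute)
  also have "\<dots> = (\<Sum>\<gamma>\<in>?G. of_int ((-1) ^ (n - length \<gamma>)) * (\<Sum>S\<in>Pow {1..<n}. d S * of_nat (Fcoef n S (comp_exp \<gamma>))))"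
    by (subst sum.swap) (simp add: sum_distrib_left)
  finally show ?thesis .
qed

lemma Psi_expansion_comp_exp:
  assumes "\<beta> \<in> comps n"
  shows "(\<Sum>\<alpha>\<in>comps n. c \<alpha> * const2 (inverse (of_nat (zee \<alpha>))) * Psicoef n \<alpha> (comp_exp \<beta>))
       = (\<Sum>\<alpha>\<in>comps n. if comp_le \<alpha> \<beta> then c \<alpha> * const2 (inverse (of_nat (pi_pair \<alpha> \<beta>))) else 0)"
  using scaled_Psicoef_comp_exp[OF _ assms] by (intro sum.cong refl) simp

theorem theorem7p12:
  fixes n :: nat and E :: "(nat \<times> nat) multiset"
    and d :: "nat set \<Rightarrow> rpoly2" and c :: "nat list \<Rightarrow> rpoly2"
  assumes G: "set_mset E \<subseteq> {1..n} \<times> {1..n}"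
    and Fexp: "\<forall>e. Bcoef n E (yvar + 1) (zvar + 1) e
                 = (\<Sum>S\<in>Pow {1..<n}. d S * of_nat (Fcoef n S e))"
    and Psiexp: "\<forall>e. (\<Sum>S\<in>Pow {1..<n}. d S * of_nat (Fcoef n (omega_set n S) e))
                 = (\<Sum>\<alpha>\<in>comps n. c \<alpha> * const2 (inverse (of_nat (zee \<alpha>))) * Psicoef n \<alpha> e)"
    and alpha: "\<alpha> \<in> comps n"
  shows "in_Nyz (c \<alpha>)"
proof -
  obtain es where es: "mset es = E" using ex_mset by blast
  with G have es_sub: "set es \<subseteq> {1..n} \<times> {1..n}" by auto
  let ?P = "\<lambda>\<alpha> \<beta>. const2 (inverse (of_nat (pi_pair \<alpha> \<beta>)))"
  have "(\<Sum>\<alpha>\<in>comps n. if comp_le \<alpha> \<beta> then (c \<alpha> - rooted_coeff es n \<alpha>) * ?P \<alpha> \<beta> else 0) = 0"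
    if \<beta>: "\<beta> \<in> comps n" for \<beta>
  proof -
    have "(\<Sum>\<alpha>\<in>comps n. if comp_le \<alpha> \<beta> then c \<alpha> * ?P \<alpha> \<beta> else 0)
        = (\<Sum>S\<in>Pow {1..<n}. d S * of_nat (Fcoef n (omega_set n S) (comp_exp \<beta>)))"
      using Psiexp Psi_expansion_comp_exp[OF \<beta>, of c] by simp
    also have "\<dots> = (\<Sum>\<gamma>\<in>{\<gamma>\<in>comps n. comp_le \<gamma> (rev \<beta>)}.
        of_int ((-1) ^ (n - length \<gamma>)) * Bcoef n (mset es) (yvar + 1) (zvar + 1) (comp_exp \<gamma>))"
      unfolding omega_Fcoef_expansion[OF \<beta>] using Fexp es by simp
    also have "\<dots> = (\<Sum>\<alpha>\<in>comps n. if comp_le \<alpha> \<beta> then rooted_coeff es n \<alpha> * ?P \<alpha> \<beta> else 0)"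
      by (rule signed_Bcoef_sum[OF \<beta> es_sub])
    finally have "(\<Sum>\<alpha>\<in>comps n. if comp_le \<alpha> \<beta> then c \<alpha> * ?P \<alpha> \<beta> else 0)
        = (\<Sum>\<alpha>\<in>comps n. if comp_le \<alpha> \<beta> then rooted_coeff es n \<alpha> * ?P \<alpha> \<beta> else 0)" .
    moreover have "(\<Sum>\<alpha>\<in>comps n. if comp_le \<alpha> \<beta> then (c \<alpha> - rooted_coeff es n \<alpha>) * ?P \<alpha> \<beta> else 0)
        = (\<Sum>\<alpha>\<in>comps n. if comp_le \<alpha> \<beta> then c \<alpha> * ?P \<alpha> \<beta> else 0)
          - (\<Sum>\<alpha>\<in>comps n. if comp_le \<alpha> \<beta> then rooted_coeff es n \<alpha> * ?P \<alpha> \<beta> else 0)"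
      unfolding sum_subtractf[symmetric] by (intro sum.cong refl) (simp add: left_diff_distrib)
    ultimately show ?thesis by simp
  qed
  hence "c \<alpha> - rooted_coeff es n \<alpha> = 0" using alpha by (intro unitriangular_zero) auto
  thus ?thesis using in_Nyz_rooted_coeff by simp
qed

end
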